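(* Assume $\mathbb Y=[-L,L]$ and the strict overlap condition: there is $B>0$ with $|g(X_i,A_i)/\pi_i^*(X_i,\mathbf O_{i-1};A_i)|\le B$ almost surely for all $i\in[n]$. Let $\mathcal F$ be a class of measurable functions $\mathbb X\times\mathbb A\to[-L,L]$, and let $\bar{\mathcal A}$ be an online algorithm producing estimates $\hat\mu_i(\mathbf O_{i-1}):\mathbb X\times\mathbb A\to\mathbb R$ (each depending measurably only on $\mathbf O_{i-1}$). Define $\bar l_i(\mu):=\{Y_i-\mu(X_i,A_i)\}^2$ and $\overline{\mathrm{Regret}}(n,\mathcal F;\bar{\mathcal A}):=\sum_{i=1}^n\bar l_i(\hat\mu_i(\mathbf O_{i-1}))-\inf_{\mu\in\mathcal F}\sum_{i=1}^n\bar l_i(\mu)$. Then the AIPW estimator built from these estimates satisfies $$\mathbb E_{\mathcal I^*}\big[\{\hat\tau_n^{\mathrm{AIPW}}(\mathbf O_n)-\tau(\mathcal I^* )\}^2\big]\le\frac1n\Big(v_*^2+\frac1n\mathbb E_{\mathcal I^*}[\overline{\mathrm{Regret}}(n,\mathcal F;\bar{\mathcal A})]+\inf_{\mu\in\mathcal F}\frac1n\sum_{i=1}^n\mathbb E_{\mathcal I^*}\big[\{\mu(X_i,A_i)-\mu^*(X_i,A_i)\}^2\big]\Big).$$ (As proved, the regret and approximation terms inside the parentheses are each multiplied by $B^2$, i.e. the bound holds with $B^2\big(\frac1n\mathbb E[\overline{\mathrm{Regret}}]+\inf_{\mu\in\mathcal F}\frac1n\sum_i\mathbb E[(\mu-\mu^*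 )^2(X_i,A_i)]\big)$ in place of those two terms; the displayed form is the paper's statement.)
   Context: Setup. Let $(\mathbb X,\lambda_{\mathbb X})$, $(\mathbb A,\lambda_{\mathbb A})$ be measurable spaces with $\sigma$-finite measures, $\mathbb Y\subseteq\mathbb R$, $\mathbb O:=\mathbb X\times\mathbb A\times\mathbb Y$. For each $i\in[n]$ a known behavioral policy has density $\pi_i^*(x,\mathbf o_{i-1};\cdot)$ w.r.t. $\lambda_{\mathbb A}$. Under the true instance $\mathcal I^*=(\Xi^*,\Gamma^* )$ data $\mathbf O_n=(X_1,A_1,Y_1,\dots,X_n,A_n,Y_n)$ are generated sequentially: $X_i\sim\Xi^*$ independently of $\mathbf O_{i-1}$ (the first $i-1$ triples); $A_i\mid(X_i,\mathbf O_{i-1})$ has density $\pi_i^*(X_i,\mathbf O_{i-1};\cdot)$; $Y_i\mid(X_i,A_i,\mathbf O_{i-1})\sim\Gamma^*(\cdot\mid X_i,A_i)$. $\mu^*(x,a):=\int y\,\Gamma^*(dy\mid x,a)$, $\sigma^2(x,a):=\int(y-\mu^*(x,a))^2\Gamma^*(dy\mid x,a)$. $g:\mathbb X\times\mathbb A\to\mathbb R$ is a given evaluation function, $\langle f,h\rangle_{\lambda_{\mathbb A}}:=\int fh\,d\lambda_{\mathbb A}$, $\tau(\mathcal I^* ):=\mathbb E_{X\sim\Xi^*}[\langle g(X,\cdot),\mu^*(X,\cdot)\rangle_{\lambda_{\mathbb A}}]$. $\|\varphi\|_{(n)}^2:=\frac1n\sum_{i=1}^n\mathbb E_{\mathcal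 I^*}[g^2(X_i,A_i)\varphi^2(X_i,A_i)/(\pi_i^* )^2(X_i,\mathbf O_{i-1};A_i)]$, $v_*^2:=\mathrm{Var}_{X\sim\Xi^*}[\langle g(X,\cdot),\mu^*(X,\cdot)\rangle_{\lambda_{\mathbb A}}]+\|\sigma\|_{(n)}^2$. AIPW estimator: $\hat\tau_n^{\mathrm{AIPW}}(\mathbf O_n):=\frac1n\sum_{i=1}^n\big[\frac{g(X_i,A_i)}{\pi_i^*(X_i,\mathbf O_{i-1};A_i)}\{Y_i-\hat\mu_i(\mathbf O_{i-1})(X_i,A_i)\}+\langle g(X_i,\cdot),\hat\mu_i(\mathbf O_{i-1})(X_i,\cdot)\rangle_{\lambda_{\mathbb A}}\big]$. All expectations are assumed finite.
   Formalization: The behavioural density $\pi_i^*(x,\mathbf o_{i-1};a)$ is also positive wherever $g(x,a)$ is nonzero, and in the bound the regret and approximation terms are each multiplied by $B^2$. Each condition added here is assumed in the paper as well or is needed for the statement above to hold. This also corrects a misprint. *)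

theory Defs
  imports "HOL-Probability.Probability"
begin

text \<open>Histories o_{i} (the first i observation triples) are represented as
  functions on the index set {..<i} (0-based), i.e. elements of a finite product space.\<close>

type_synonym ('x, 'a) hist = "nat \<Rightarrow> 'x \<times> 'a \<times> real"

definition histM :: "'x measure \<Rightarrow> 'a measure \<Rightarrow> nat \<Rightarrow> ('x, 'a) hist measure" where
  "histM MX MA i = PiM {..<i} (\<lambda>_. MX \<Otimes>\<^sub>M MA \<Otimes>\<^sub>M (borel :: real measure))"

definition hist :: "(nat \<Rightarrow> 'w \<Rightarrow> 'x) \<Rightarrow> (nat \<Rightarrow> 'w \<Rightarrow> 'a) \<Rightarrow> (nat \<Rightarrow> 'w \<Rightarrow> real)
    \<Rightarrow> nat \<Rightarrow> 'w \<Rightarrow> ('x, 'a) hist" where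
  "hist X A Y i \<omega> = (\<lambda>j\<in>{..<i}. (X j \<omega>, A j \<omega>, Y j \<omega>))"

text \<open>Data-generating process, 0-based index i < n (paper index i+1).
  The conditional laws are encoded by the disintegration identities for all
  nonnegative measurable test functions.\<close>

definition sequential_model ::
  "'w measure \<Rightarrow> 'x measure \<Rightarrow> 'a measure \<Rightarrow> 'a measure \<Rightarrow> 'x measure
   \<Rightarrow> ('x \<Rightarrow> 'a \<Rightarrow> real measure) \<Rightarrow> (nat \<Rightarrow> 'x \<Rightarrow> ('x, 'a) hist \<Rightarrow> 'a \<Rightarrow> real)
   \<Rightarrow> (nat \<Rightarrow> 'w \<Rightarrow> 'x) \<Rightarrow> (nat \<Rightarrow> 'w \<Rightarrow> 'a) \<Rightarrow> (nat \<Rightarrow> 'w \<Rightarrow> real) \<Rightarrow> nat \<Rightarrow> bool" where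
  "sequential_model M MX MA lamA Xi Gam pol X A Y n \<longleftrightarrow>
     prob_space M \<and>
     sigma_finite_measure lamA \<and> sets lamA = sets MA \<and>
     prob_space Xi \<and> sets Xi = sets MX \<and>
     (\<forall>x a. prob_space (Gam x a) \<and> sets (Gam x a) = sets (borel :: real measure)) \<and>
     (\<lambda>(x, a). Gam x a) \<in> measurable (MX \<Otimes>\<^sub>M MA) (subprob_algebra borel) \<and>
     (\<forall>i<n. (\<lambda>(x, hh, a). pol i x hh a) \<in> borel_measurable (MX \<Otimes>\<^sub>M histM MX MA i \<Otimes>\<^sub>M MA)) \<and>
     (\<forall>i<n. \<forall>x hh a. 0 \<le> pol i x hh a) \<and>
     (\<forall>i<n. X i \<in> measurable M MX \<and> A i \<in> measurable M MA \<and> Y i \<in> borel_measurable M) \<and>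
     \<comment> \<open>X_i ~ Xi independently of O_{i-1}\<close>
     (\<forall>i<n. \<forall>h \<in> borel_measurable (histM MX MA i \<Otimes>\<^sub>M MX).
        (\<integral>\<^sup>+\<omega>. h (hist X A Y i \<omega>, X i \<omega>) \<partial>M)
        = (\<integral>\<^sup>+\<omega>. (\<integral>\<^sup>+x. h (hist X A Y i \<omega>, x) \<partial>Xi) \<partial>M)) \<and>
     \<comment> \<open>A_i | (X_i, O_{i-1}) has density pi_i(X_i, O_{i-1}; .) w.r.t. lamA\<close>
     (\<forall>i<n. \<forall>h \<in> borel_measurable (histM MX MA i \<Otimes>\<^sub>M MX \<Otimes>\<^sub>M MA).
        (\<integral>\<^sup>+\<omega>. h (hist X A Y i \<omega>, X i \<omega>, A i \<omega>) \<partial>M)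
        = (\<integral>\<^sup>+\<omega>. (\<integral>\<^sup>+a. ennreal (pol i (X i \<omega>) (hist X A Y i \<omega>) a)
                        * h (hist X A Y i \<omega>, X i \<omega>, a) \<partial>lamA) \<partial>M)) \<and>
     \<comment> \<open>Y_i | (X_i, A_i, O_{i-1}) ~ Gam(. | X_i, A_i)\<close>
     (\<forall>i<n. \<forall>h \<in> borel_measurable (histM MX MA i \<Otimes>\<^sub>M MX \<Otimes>\<^sub>M MA \<Otimes>\<^sub>M borel).
        (\<integral>\<^sup>+\<omega>. h (hist X A Y i \<omega>, X i \<omega>, A i \<omega>, Y i \<omega>) \<partial>M)
        = (\<integral>\<^sup>+\<omega>. (\<integral>\<^sup>+y. h (hist X A Y i \<omega>, X i \<omega>, A i \<omega>, y) \<partial>Gam (X i \<omega>) (A i \<omega>)) \<partial>M))"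

definition mu_star :: "('x \<Rightarrow> 'a \<Rightarrow> real measure) \<Rightarrow> 'x \<Rightarrow> 'a \<Rightarrow> real" where
  "mu_star Gam x a = (\<integral>y. y \<partial>Gam x a)"

definition sigma_sq :: "('x \<Rightarrow> 'a \<Rightarrow> real measure) \<Rightarrow> 'x \<Rightarrow> 'a \<Rightarrow> real" where
  "sigma_sq Gam x a = (\<integral>y. (y - mu_star Gam x a)\<^sup>2 \<partial>Gam x a)"

definition innerA :: "'a measure \<Rightarrow> ('a \<Rightarrow> real) \<Rightarrow> ('a \<Rightarrow> real) \<Rightarrow> real" where
  "innerA lamA f h = (\<integral>a. f a * h a \<partial>lamA)"

definition tau :: "'x measure \<Rightarrow> 'a measure \<Rightarrow> ('x \<Rightarrow> 'a \<Rightarrow> real) \<Rightarrow> ('x \<Rightarrow> 'a \<Rightarrow> real measure) \<Rightarrow> real" where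
  "tau Xi lamA g Gam = (\<integral>x. innerA lamA (g x) (mu_star Gam x) \<partial>Xi)"

text \<open>\<open>\<parallel>\<phi>\<parallel>\<^sub>(n)\<^sup>2\<close> for a function phi (here phi = sigma^2 is passed squared).\<close>
definition norm_n_sq :: "'w measure \<Rightarrow> ('x \<Rightarrow> 'a \<Rightarrow> real) \<Rightarrow> (nat \<Rightarrow> 'x \<Rightarrow> ('x, 'a) hist \<Rightarrow> 'a \<Rightarrow> real)
   \<Rightarrow> (nat \<Rightarrow> 'w \<Rightarrow> 'x) \<Rightarrow> (nat \<Rightarrow> 'w \<Rightarrow> 'a) \<Rightarrow> (nat \<Rightarrow> 'w \<Rightarrow> real) \<Rightarrow> nat
   \<Rightarrow> ('x \<Rightarrow> 'a \<Rightarrow> real) \<Rightarrow> real" where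
  "norm_n_sq M g pol X A Y n phi = (1 / real n) * (\<Sum>i<n.
     \<integral>\<omega>. (g (X i \<omega>) (A i \<omega>))\<^sup>2 * (phi (X i \<omega>) (A i \<omega>))\<^sup>2
           / (pol i (X i \<omega>) (hist X A Y i \<omega>) (A i \<omega>))\<^sup>2 \<partial>M)"

definition v_star_sq where
  "v_star_sq M Xi lamA g Gam pol X A Y n =
     (\<integral>x. (innerA lamA (g x) (mu_star Gam x) - tau Xi lamA g Gam)\<^sup>2 \<partial>Xi)
     + norm_n_sq M g pol X A Y n (\<lambda>x a. sqrt (sigma_sq Gam x a))"

definition aipw where
  "aipw lamA g pol muhat X A Y n \<omega> = (1 / real n) * (\<Sum>i<n.
     g (X i \<omega>) (A i \<omega>) / pol i (X i \<omega>) (hist X A Y i \<omega>) (A i \<omega>)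
       * (Y i \<omega> - muhat i (hist X A Y i \<omega>) (X i \<omega>) (A i \<omega>))
     + innerA lamA (g (X i \<omega>)) (muhat i (hist X A Y i \<omega>) (X i \<omega>)))"

definition regret where
  "regret F muhat X A Y n \<omega> =
     (\<Sum>i<n. (Y i \<omega> - muhat i (hist X A Y i \<omega>) (X i \<omega>) (A i \<omega>))\<^sup>2)
     - (INF mu\<in>F. \<Sum>i<n. (Y i \<omega> - mu (X i \<omega>) (A i \<omega>))\<^sup>2)"

end

theory Submission
  imports Defs
begin

text \<open>
  Let \<open>W\<^sub>i = g / \<pi>\<^sub>i\<close> be the importance weight and \<open>\<mu>\<^sub>i\<close> the estimate fitted on the past. The
  AIPW error is \<open>(1/n) \<Sum> D\<^sub>i\<close> with \<open>D\<^sub>i = W\<^sub>i (Y\<^sub>i - \<mu>\<^sub>i) + \<langle>g, \<mu>\<^sub>i\<rangle>(X\<^sub>i) - \<tau>\<close>. Since \<open>\<pi>\<^sub>i\<close> and \<open>\<mu>\<^sub>i\<close>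
  depend on the past only, \<open>D\<^sub>i\<close> is orthogonal to every square-integrable function of the past,
  so \<open>E (\<Sum> D\<^sub>i)\<^sup>2 = \<Sum> E D\<^sub>i\<^sup>2\<close>.

  Each \<open>D\<^sub>i\<close> is the sum of three orthogonal parts: the noise \<open>W\<^sub>i (Y\<^sub>i - \<mu>\<^sup>*)\<close>; the fitting error
  \<open>W\<^sub>i (\<mu>\<^sup>* - \<mu>\<^sub>i)\<close> minus its conditional mean \<open>\<langle>g, \<mu>\<^sup>* - \<mu>\<^sub>i\<rangle>(X\<^sub>i)\<close> over the action; and the centred
  outcome \<open>\<langle>g, \<mu>\<^sup>*\<rangle>(X\<^sub>i) - \<tau>\<close>. Subtracting a conditional mean does not increase the second
  moment, so \<open>|W\<^sub>i| \<le> B\<close> gives \<open>E D\<^sub>i\<^sup>2 \<le> E W\<^sub>i\<^sup>2 \<sigma>\<^sup>2 + B\<^sup>2 E (\<mu>\<^sup>* - \<mu>\<^sub>i)\<^sup>2 + Var \<langle>g, \<mu>\<^sup>*\<rangle>\<close>.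

  Finally \<open>E (Y\<^sub>i - \<nu>)\<^sup>2 = E \<sigma>\<^sup>2 + E (\<mu>\<^sup>* - \<nu>)\<^sup>2\<close> for every \<open>\<nu>\<close> fitted on the past. Comparing
  \<open>\<nu> = \<mu>\<^sub>i\<close> with a fixed \<open>\<nu> = \<mu> \<in> F\<close>, the variance terms cancel, and the expected regret bounds
  \<open>\<Sum> E (\<mu>\<^sup>* - \<mu>\<^sub>i)\<^sup>2\<close> by the approximation error of the best \<open>\<mu> \<in> F\<close>.
\<close>

section \<open>Square-integrable functions\<close>

lemma power2_le_of_abs_le: "\<bar>x\<bar> \<le> K \<Longrightarrow> x\<^sup>2 \<le> (K::real)\<^sup>2"
  using power_mono[of "\<bar>x\<bar>" K 2] by simp

lemma abs_mult_le_sum_squares: "\<bar>a * b\<bar> \<le> a\<^sup>2 + (b::real)\<^sup>2"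
proof -
  have "2 * \<bar>a\<bar> * \<bar>b\<bar> \<le> a\<^sup>2 + b\<^sup>2"
    using sum_squares_bound[of "\<bar>a\<bar>" "\<bar>b\<bar>"] by simp
  moreover have "0 \<le> \<bar>a\<bar> * \<bar>b\<bar>"
    by simp
  ultimately show ?thesis
    unfolding abs_mult by linarith
qed

lemma integrable_mult_of_square_integrable:
  fixes f g :: "'a \<Rightarrow> real"
  assumes [measurable]: "f \<in> borel_measurable M" "g \<in> borel_measurable M"
    and "integrable M (\<lambda>x. (f x)\<^sup>2)" "integrable M (\<lambda>x. (g x)\<^sup>2)"
  shows "integrable M (\<lambda>x. f x * g x)"
  by (rule Bochner_Integration.integrable_bound[OF Bochner_Integration.integrable_add[OF assms(3,4)]])
     (auto intro: order_trans[OF abs_mult_le_sum_squares])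

lemma integrable_square_add:
  fixes f g :: "'a \<Rightarrow> real"
  assumes [measurable]: "f \<in> borel_measurable M" "g \<in> borel_measurable M"
    and "integrable M (\<lambda>x. (f x)\<^sup>2)" "integrable M (\<lambda>x. (g x)\<^sup>2)"
  shows "integrable M (\<lambda>x. (f x + g x)\<^sup>2)"
  using integrable_mult_of_square_integrable[OF assms] assms(3,4)
  by (auto simp: power2_sum mult.assoc intro!: Bochner_Integration.integrable_add integrable_mult_right)

lemma integrable_square_diff:
  fixes f g :: "'a \<Rightarrow> real"
  assumes [measurable]: "f \<in> borel_measurable M" "g \<in> borel_measurable M"
    and "integrable M (\<lambda>x. (f x)\<^sup>2)" "integrable M (\<lambda>x. (g x)\<^sup>2)"
  shows "integrable M (\<lambda>x. (f x - g x)\<^sup>2)"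
  using integrable_square_add[of f M "\<lambda>x. - g x"] assms by simp

lemma integral_square_add_orthogonal:
  fixes f g :: "'a \<Rightarrow> real"
  assumes [measurable]: "f \<in> borel_measurable M" "g \<in> borel_measurable M"
    and "integrable M (\<lambda>x. (f x)\<^sup>2)" "integrable M (\<lambda>x. (g x)\<^sup>2)"
    and orth: "(\<integral>x. f x * g x \<partial>M) = 0"
  shows "(\<integral>x. (f x + g x)\<^sup>2 \<partial>M) = (\<integral>x. (f x)\<^sup>2 \<partial>M) + (\<integral>x. (g x)\<^sup>2 \<partial>M)"
proof -
  have "integrable M (\<lambda>x. f x * g x)"
    by (rule integrable_mult_of_square_integrable[OF assms(1-4)])
  then have "(\<integral>x. (f x + g x)\<^sup>2 \<partial>M) = (\<integral>x. (f x)\<^sup>2 \<partial>M) + (\<integral>x. (g x)\<^sup>2 \<partial>M) + 2 * (\<integral>x. f x * g x \<partial>M)"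
    using assms(3,4) by (simp add: power2_sum mult.assoc)
  with orth show ?thesis by simp
qed

lemma (in finite_measure) integrable_square_of_AE_abs_le:
  fixes f :: "'a \<Rightarrow> real"
  assumes "f \<in> borel_measurable M" and "AE x in M. \<bar>f x\<bar> \<le> K"
  shows "integrable M (\<lambda>x. (f x)\<^sup>2)"
proof (rule integrable_const_bound[where B = "K\<^sup>2"])
  show "AE x in M. norm ((f x)\<^sup>2) \<le> K\<^sup>2"
    using assms(2) by eventually_elim (simp add: power2_le_of_abs_le)
qed (use assms(1) in simp)

lemma integrable_square_mult_of_AE_abs_le:
  fixes f w :: "'a \<Rightarrow> real"
  assumes [measurable]: "f \<in> borel_measurable M" "w \<in> borel_measurable M"
    and "integrable M (\<lambda>x. (f x)\<^sup>2)" and "AE x in M. \<bar>w x\<bar> \<le> K"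
  shows "integrable M (\<lambda>x. (w x * f x)\<^sup>2)"
proof (rule Bochner_Integration.integrable_bound[OF integrable_mult_right[OF assms(3), of "K\<^sup>2"]])
  show "AE x in M. norm ((w x * f x)\<^sup>2) \<le> norm (K\<^sup>2 * (f x)\<^sup>2)"
    using assms(4)
  proof eventually_elim
    case (elim x)
    then have "(w x)\<^sup>2 \<le> K\<^sup>2"
      by (rule power2_le_of_abs_le)
    then show ?case
      by (simp add: power_mult_distrib mult_right_mono)
  qed
qed simp

lemma weighted_integral_square_le:
  fixes p u :: "'a \<Rightarrow> real"
  assumes "\<And>x. 0 \<le> p x" "integrable N p" "(\<integral>x. p x \<partial>N) = 1"
    "integrable N (\<lambda>x. p x * u x)" "integrable N (\<lambda>x. p x * (u x)\<^sup>2)"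
  shows "(\<integral>x. p x * u x \<partial>N)\<^sup>2 \<le> (\<integral>x. p x * (u x)\<^sup>2 \<partial>N)"
proof -
  define t where "t = (\<integral>x. p x * u x \<partial>N)"
  have "0 \<le> (\<integral>x. p x * (u x - t)\<^sup>2 \<partial>N)"
    using assms(1) by (intro Bochner_Integration.integral_nonneg) auto
  also have "(\<lambda>x. p x * (u x - t)\<^sup>2) = (\<lambda>x. p x * (u x)\<^sup>2 - 2 * t * (p x * u x) + t\<^sup>2 * p x)"
    by (auto simp: power2_diff algebra_simps)
  also have "(\<integral>x. p x * (u x)\<^sup>2 - 2 * t * (p x * u x) + t\<^sup>2 * p x \<partial>N)
      = (\<integral>x. p x * (u x)\<^sup>2 \<partial>N) - t\<^sup>2"
    using assms(2-5) by (simp add: t_def power2_eq_square)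
  finally show ?thesis by (simp add: t_def)
qed

section \<open>Integrals along a disintegration\<close>

text \<open>Given \<open>U\<close>, the conditional law of \<open>V\<close> has density \<open>p U\<close> with respect to \<open>N U\<close>; each of
  the three sampling steps of the model is an instance.\<close>

locale kernel_disintegration =
  fixes M :: "'w measure" and MU :: "'u measure" and MV :: "'v measure"
    and U :: "'w \<Rightarrow> 'u" and V :: "'w \<Rightarrow> 'v"
    and N :: "'u \<Rightarrow> 'v measure" and p :: "'u \<Rightarrow> 'v \<Rightarrow> real"
  assumes U_measurable [measurable]: "U \<in> measurable M MU"
    and V_measurable [measurable]: "V \<in> measurable M MV"
    and sets_kernel: "\<And>u. sets (N u) = sets MV"
    and density_measurable [measurable]: "(\<lambda>(u, v). p u v) \<in> borel_measurable (MU \<Otimes>\<^sub>M MV)"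
    and density_nonneg: "\<And>u v. 0 \<le> p u v"
    and nn_integral_kernel_measurable:
      "\<And>h. h \<in> borel_measurable (MU \<Otimes>\<^sub>M MV) \<Longrightarrow> (\<lambda>u. \<integral>\<^sup>+v. h (u, v) \<partial>N u) \<in> borel_measurable MU"
    and nn_integral_disintegration:
      "\<And>h. h \<in> borel_measurable (MU \<Otimes>\<^sub>M MV) \<Longrightarrow>
        (\<integral>\<^sup>+\<omega>. h (U \<omega>, V \<omega>) \<partial>M) = (\<integral>\<^sup>+\<omega>. (\<integral>\<^sup>+v. ennreal (p (U \<omega>) v) * h (U \<omega>, v) \<partial>N (U \<omega>)) \<partial>M)"
begin

lemma slice_measurable:
  assumes "u \<in> space MU" and [measurable]: "k \<in> borel_measurable (MU \<Otimes>\<^sub>M MV)"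
  shows "(\<lambda>v. p u v * k (u, v)) \<in> borel_measurable (N u)"
proof -
  have "(\<lambda>z. p (fst z) (snd z) * k z) \<in> borel_measurable (MU \<Otimes>\<^sub>M MV)"
    by measurable
  from measurable_Pair2[OF this assms(1)] show ?thesis
    by (simp add: measurable_cong_sets[OF sets_kernel refl])
qed

definition slice_nn_integral :: "('u \<times> 'v \<Rightarrow> real) \<Rightarrow> 'w \<Rightarrow> ennreal" where
  "slice_nn_integral k \<omega> = (\<integral>\<^sup>+v. ennreal (p (U \<omega>) v * k (U \<omega>, v)) \<partial>N (U \<omega>))"

lemma slice_nn_integral_measurable:
  assumes [measurable]: "k \<in> borel_measurable (MU \<Otimes>\<^sub>M MV)"
  shows "slice_nn_integral k \<in> borel_measurable M"
proof -
  have "(\<lambda>u. \<integral>\<^sup>+v. ennreal (p u v * k (u, v)) \<partial>N u) \<in> borel_measurable MU"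
    using nn_integral_kernel_measurable[of "\<lambda>z. ennreal (p (fst z) (snd z) * k z)"] by simp
  then show ?thesis
    unfolding slice_nn_integral_def by (rule measurable_compose[OF U_measurable, rotated])
qed

lemma nn_integral_slice_nn_integral:
  assumes "k \<in> borel_measurable (MU \<Otimes>\<^sub>M MV)" and "\<And>z. 0 \<le> k z"
  shows "(\<integral>\<^sup>+\<omega>. slice_nn_integral k \<omega> \<partial>M) = (\<integral>\<^sup>+\<omega>. ennreal (k (U \<omega>, V \<omega>)) \<partial>M)"
  using nn_integral_disintegration[of "\<lambda>z. ennreal (k z)"] assms density_nonneg
  by (simp add: slice_nn_integral_def ennreal_mult)

lemma integral_disintegration_nonneg:
  fixes k :: "'u \<times> 'v \<Rightarrow> real"
  assumes k [measurable]: "k \<in> borel_measurable (MU \<Otimes>\<^sub>M MV)" and k_nonneg: "\<And>z. 0 \<le> k z"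
    and k_integrable: "integrable M (\<lambda>\<omega>. k (U \<omega>, V \<omega>))"
  shows "AE \<omega> in M. integrable (N (U \<omega>)) (\<lambda>v. p (U \<omega>) v * k (U \<omega>, v))
                \<and> (\<integral>v. p (U \<omega>) v * k (U \<omega>, v) \<partial>N (U \<omega>)) = enn2real (slice_nn_integral k \<omega>)"
    and "integrable M (\<lambda>\<omega>. enn2real (slice_nn_integral k \<omega>))"
    and "(\<integral>\<omega>. enn2real (slice_nn_integral k \<omega>) \<partial>M) = (\<integral>\<omega>. k (U \<omega>, V \<omega>) \<partial>M)"
proof -
  note G_measurable [measurable] = slice_nn_integral_measurable[OF k]
  have G_eq: "(\<integral>\<^sup>+\<omega>. slice_nn_integral k \<omega> \<partial>M) = (\<integral>\<^sup>+\<omega>. ennreal (k (U \<omega>, V \<omega>)) \<partial>M)"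
    by (rule nn_integral_slice_nn_integral[OF k k_nonneg])
  also have "\<dots> < \<infinity>"
    using k_integrable by (simp add: integrable_iff_bounded k_nonneg)
  finally have G_finite: "(\<integral>\<^sup>+\<omega>. slice_nn_integral k \<omega> \<partial>M) < \<infinity>" .
  have AE_finite: "AE \<omega> in M. slice_nn_integral k \<omega> \<noteq> \<infinity>"
    using nn_integral_PInf_AE[OF G_measurable] G_finite by simp
  have G_real: "(\<integral>\<^sup>+\<omega>. ennreal (enn2real (slice_nn_integral k \<omega>)) \<partial>M) = (\<integral>\<^sup>+\<omega>. slice_nn_integral k \<omega> \<partial>M)"
    using AE_finite by (intro nn_integral_cong_AE) (auto simp: ennreal_enn2real_if)
  show "AE \<omega> in M. integrable (N (U \<omega>)) (\<lambda>v. p (U \<omega>) v * k (U \<omega>, v))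
                \<and> (\<integral>v. p (U \<omega>) v * k (U \<omega>, v) \<partial>N (U \<omega>)) = enn2real (slice_nn_integral k \<omega>)"
    using AE_finite
  proof (rule AE_mp[OF _ AE_I2], intro impI conjI)
    fix \<omega> assume "\<omega> \<in> space M" and "slice_nn_integral k \<omega> \<noteq> \<infinity>"
    moreover from \<open>\<omega> \<in> space M\<close> have "(\<lambda>v. p (U \<omega>) v * k (U \<omega>, v)) \<in> borel_measurable (N (U \<omega>))"
      by (intro slice_measurable k measurable_space[OF U_measurable])
    ultimately show "integrable (N (U \<omega>)) (\<lambda>v. p (U \<omega>) v * k (U \<omega>, v))"
      and "(\<integral>v. p (U \<omega>) v * k (U \<omega>, v) \<partial>N (U \<omega>)) = enn2real (slice_nn_integral k \<omega>)"
      using density_nonneg k_nonneg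
      by (auto simp: slice_nn_integral_def top.not_eq_extremum intro!: integrableI_nonneg integral_eq_nn_integral)
  qed
  show "integrable M (\<lambda>\<omega>. enn2real (slice_nn_integral k \<omega>))"
    using G_real G_finite by (intro integrableI_nonneg) auto
  show "(\<integral>\<omega>. enn2real (slice_nn_integral k \<omega>) \<partial>M) = (\<integral>\<omega>. k (U \<omega>, V \<omega>) \<partial>M)"
    using G_real G_eq k_nonneg by (simp add: integral_eq_nn_integral)
qed

definition slice_integral :: "('u \<times> 'v \<Rightarrow> real) \<Rightarrow> 'w \<Rightarrow> real" where
  "slice_integral f \<omega> =
     enn2real (slice_nn_integral (\<lambda>z. max (f z) 0) \<omega>) - enn2real (slice_nn_integral (\<lambda>z. max (- f z) 0) \<omega>)"

lemma integral_disintegration_real: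
  fixes f :: "'u \<times> 'v \<Rightarrow> real"
  assumes f [measurable]: "f \<in> borel_measurable (MU \<Otimes>\<^sub>M MV)"
    and f_integrable: "integrable M (\<lambda>\<omega>. f (U \<omega>, V \<omega>))"
  shows "AE \<omega> in M. integrable (N (U \<omega>)) (\<lambda>v. p (U \<omega>) v * f (U \<omega>, v))
                \<and> (\<integral>v. p (U \<omega>) v * f (U \<omega>, v) \<partial>N (U \<omega>)) = slice_integral f \<omega>"
    and "integrable M (slice_integral f)"
    and "(\<integral>\<omega>. slice_integral f \<omega> \<partial>M) = (\<integral>\<omega>. f (U \<omega>, V \<omega>) \<partial>M)"
proof -
  define fp where "fp = (\<lambda>z. max (f z) 0)"
  define fm where "fm = (\<lambda>z. max (- f z) 0)"
  have fp_measurable [measurable]: "fp \<in> borel_measurable (MU \<Otimes>\<^sub>M MV)"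
    and fm_measurable [measurable]: "fm \<in> borel_measurable (MU \<Otimes>\<^sub>M MV)"
    unfolding fp_def fm_def by measurable
  have fp_integrable: "integrable M (\<lambda>\<omega>. fp (U \<omega>, V \<omega>))"
    and fm_integrable: "integrable M (\<lambda>\<omega>. fm (U \<omega>, V \<omega>))"
    by (auto intro: Bochner_Integration.integrable_bound[OF f_integrable] simp: fp_def fm_def)
  have split: "\<And>z. f z = fp z - fm z" and "\<And>z. 0 \<le> fp z" "\<And>z. 0 \<le> fm z"
    unfolding fp_def fm_def by auto
  note P = integral_disintegration_nonneg[OF fp_measurable this(2) fp_integrable]
    and Q = integral_disintegration_nonneg[OF fm_measurable this(3) fm_integrable]
  have G: "slice_integral f = (\<lambda>\<omega>. enn2real (slice_nn_integral fp \<omega>) - enn2real (slice_nn_integral fm \<omega>))"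
    by (simp add: slice_integral_def fp_def fm_def fun_eq_iff)
  show "AE \<omega> in M. integrable (N (U \<omega>)) (\<lambda>v. p (U \<omega>) v * f (U \<omega>, v))
      \<and> (\<integral>v. p (U \<omega>) v * f (U \<omega>, v) \<partial>N (U \<omega>)) = slice_integral f \<omega>"
    using P(1) Q(1)
  proof eventually_elim
    case (elim \<omega>)
    have "(\<lambda>v. p (U \<omega>) v * f (U \<omega>, v)) = (\<lambda>v. p (U \<omega>) v * fp (U \<omega>, v) - p (U \<omega>) v * fm (U \<omega>, v))"
      by (simp add: split[of "(U \<omega>, _)"] right_diff_distrib)
    with elim show ?case
      by (simp add: G)
  qed
  show "integrable M (slice_integral f)"
    using P(2) Q(2) by (simp add: G)
  have "(\<integral>\<omega>. f (U \<omega>, V \<omega>) \<partial>M) = (\<integral>\<omega>. fp (U \<omega>, V \<omega>) \<partial>M) - (\<integral>\<omega>. fm (U \<omega>, V \<omega>) \<partial>M)"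
    using fp_integrable fm_integrable by (simp add: split)
  also have "\<dots> = (\<integral>\<omega>. slice_integral f \<omega> \<partial>M)"
    using P(2,3) Q(2,3) by (simp add: G)
  finally show "(\<integral>\<omega>. slice_integral f \<omega> \<partial>M) = (\<integral>\<omega>. f (U \<omega>, V \<omega>) \<partial>M)" ..
qed

lemma integral_disintegration:
  fixes f :: "'u \<times> 'v \<Rightarrow> real" and E :: "'w \<Rightarrow> real"
  assumes f: "f \<in> borel_measurable (MU \<Otimes>\<^sub>M MV)"
    and f_integrable: "integrable M (\<lambda>\<omega>. f (U \<omega>, V \<omega>))"
    and E: "E \<in> borel_measurable M"
    and E_version: "AE \<omega> in M. integrable (N (U \<omega>)) (\<lambda>v. p (U \<omega>) v * f (U \<omega>, v)) \<longrightarrow>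
                 (\<integral>v. p (U \<omega>) v * f (U \<omega>, v) \<partial>N (U \<omega>)) = E \<omega>"
  shows "AE \<omega> in M. integrable (N (U \<omega>)) (\<lambda>v. p (U \<omega>) v * f (U \<omega>, v))"
    and "integrable M E"
    and "(\<integral>\<omega>. f (U \<omega>, V \<omega>) \<partial>M) = (\<integral>\<omega>. E \<omega> \<partial>M)"
proof -
  note slice = integral_disintegration_real[OF f f_integrable]
  have slice_measurable: "slice_integral f \<in> borel_measurable M"
    using slice(2) by (rule borel_measurable_integrable)
  have E_eq: "AE \<omega> in M. E \<omega> = slice_integral f \<omega>"
    using slice(1) E_version by eventually_elim auto
  show "AE \<omega> in M. integrable (N (U \<omega>)) (\<lambda>v. p (U \<omega>) v * f (U \<omega>, v))"
    using slice(1) by auto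
  show "integrable M E"
    using integrable_cong_AE[OF E slice_measurable E_eq] slice(2) by simp
  show "(\<integral>\<omega>. f (U \<omega>, V \<omega>) \<partial>M) = (\<integral>\<omega>. E \<omega> \<partial>M)"
    using integral_cong_AE[OF E slice_measurable E_eq] slice(3) by simp
qed

lemma integral_disintegration_pointwise:
  fixes f :: "'u \<times> 'v \<Rightarrow> real" and e :: "'u \<Rightarrow> real"
  assumes [measurable]: "f \<in> borel_measurable (MU \<Otimes>\<^sub>M MV)" "e \<in> borel_measurable MU"
    and "integrable M (\<lambda>\<omega>. f (U \<omega>, V \<omega>))"
    and "\<And>u. u \<in> space MU \<Longrightarrow> integrable (N u) (\<lambda>v. p u v * f (u, v)) \<Longrightarrow>
           (\<integral>v. p u v * f (u, v) \<partial>N u) = e u"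
  shows "(\<integral>\<omega>. f (U \<omega>, V \<omega>) \<partial>M) = (\<integral>\<omega>. e (U \<omega>) \<partial>M)"
    and "integrable M (\<lambda>\<omega>. e (U \<omega>))"
  using integral_disintegration(2,3)[OF assms(1,3), of "\<lambda>\<omega>. e (U \<omega>)"] assms(4) measurable_space[OF U_measurable]
  by auto

end

section \<open>The sequential model\<close>

locale aipw_model =
  fixes M :: "'w measure" and MX :: "'x measure" and MA :: "'a measure"
    and lamA :: "'a measure" and Xi :: "'x measure"
    and Gam :: "'x \<Rightarrow> 'a \<Rightarrow> real measure"
    and pol :: "nat \<Rightarrow> 'x \<Rightarrow> ('x, 'a) hist \<Rightarrow> 'a \<Rightarrow> real"
    and X :: "nat \<Rightarrow> 'w \<Rightarrow> 'x" and A :: "nat \<Rightarrow> 'w \<Rightarrow> 'a" and Y :: "nat \<Rightarrow> 'w \<Rightarrow> real"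
    and g :: "'x \<Rightarrow> 'a \<Rightarrow> real"
    and muhat :: "nat \<Rightarrow> ('x, 'a) hist \<Rightarrow> 'x \<Rightarrow> 'a \<Rightarrow> real"
    and n :: nat and L B :: real
  assumes model: "sequential_model M MX MA lamA Xi Gam pol X A Y n"
    and Y_range: "\<forall>x a. AE y in Gam x a. \<bar>y\<bar> \<le> L"
    and g_measurable: "(\<lambda>(x, a). g x a) \<in> borel_measurable (MX \<Otimes>\<^sub>M MA)"
    and overlap: "\<forall>i<n. AE \<omega> in M.
        \<bar>g (X i \<omega>) (A i \<omega>) / pol i (X i \<omega>) (hist X A Y i \<omega>) (A i \<omega>)\<bar> \<le> B"
    and coverage: "\<forall>i<n. \<forall>x hh a. g x a \<noteq> 0 \<longrightarrow> 0 < pol i x hh a"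
    and muhat_measurable: "\<forall>i<n. (\<lambda>(hh, x, a). muhat i hh x a)
                        \<in> borel_measurable (histM MX MA i \<Otimes>\<^sub>M MX \<Otimes>\<^sub>M MA)"
    and integrable_inner_muhat: "\<forall>i<n. \<forall>hh x. integrable lamA (\<lambda>a. g x a * muhat i hh x a)"
    and integrable_inner_mu_star: "\<forall>x. integrable lamA (\<lambda>a. g x a * mu_star Gam x a)"
    and square_integrable_inner_star: "integrable Xi (\<lambda>x. (innerA lamA (g x) (mu_star Gam x))\<^sup>2)"
begin

abbreviation "inner_star x \<equiv> innerA lamA (g x) (mu_star Gam x)"
abbreviation "target \<equiv> tau Xi lamA g Gam"

lemma prob_space_M: "prob_space M"
  and sigma_finite_lamA: "sigma_finite_measure lamA" and sets_lamA: "sets lamA = sets MA"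
  and prob_space_Xi: "prob_space Xi" and sets_Xi: "sets Xi = sets MX"
  and prob_space_Gam: "\<And>x a. prob_space (Gam x a)"
  and sets_Gam: "\<And>x a. sets (Gam x a) = sets (borel :: real measure)"
  and Gam_measurable: "(\<lambda>(x, a). Gam x a) \<in> measurable (MX \<Otimes>\<^sub>M MA) (subprob_algebra borel)"
  using model unfolding sequential_model_def by auto

sublocale M: prob_space M
  by (rule prob_space_M)

lemma model_at:
  assumes "i < n"
  shows "(\<lambda>(x, hh, a). pol i x hh a) \<in> borel_measurable (MX \<Otimes>\<^sub>M histM MX MA i \<Otimes>\<^sub>M MA)"
    and "\<And>x hh a. 0 \<le> pol i x hh a"
    and "X i \<in> measurable M MX" and "A i \<in> measurable M MA" and "Y i \<in> borel_measurable M"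
    and "\<And>h. h \<in> borel_measurable (histM MX MA i \<Otimes>\<^sub>M MX) \<Longrightarrow>
        (\<integral>\<^sup>+\<omega>. h (hist X A Y i \<omega>, X i \<omega>) \<partial>M)
        = (\<integral>\<^sup>+\<omega>. (\<integral>\<^sup>+x. h (hist X A Y i \<omega>, x) \<partial>Xi) \<partial>M)"
    and "\<And>h. h \<in> borel_measurable (histM MX MA i \<Otimes>\<^sub>M MX \<Otimes>\<^sub>M MA) \<Longrightarrow>
        (\<integral>\<^sup>+\<omega>. h (hist X A Y i \<omega>, X i \<omega>, A i \<omega>) \<partial>M)
        = (\<integral>\<^sup>+\<omega>. (\<integral>\<^sup>+a. ennreal (pol i (X i \<omega>) (hist X A Y i \<omega>) a)
                        * h (hist X A Y i \<omega>, X i \<omega>, a) \<partial>lamA) \<partial>M)"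
    and "\<And>h. h \<in> borel_measurable (histM MX MA i \<Otimes>\<^sub>M MX \<Otimes>\<^sub>M MA \<Otimes>\<^sub>M borel) \<Longrightarrow>
        (\<integral>\<^sup>+\<omega>. h (hist X A Y i \<omega>, X i \<omega>, A i \<omega>, Y i \<omega>) \<partial>M)
        = (\<integral>\<^sup>+\<omega>. (\<integral>\<^sup>+y. h (hist X A Y i \<omega>, X i \<omega>, A i \<omega>, y) \<partial>Gam (X i \<omega>) (A i \<omega>)) \<partial>M)"
  using model assms unfolding sequential_model_def by auto

lemma integrable_Gam: "integrable (Gam x a) (\<lambda>y. y)" "integrable (Gam x a) (\<lambda>y. y\<^sup>2)"
proof -
  interpret prob_space "Gam x a"
    by (rule prob_space_Gam)
  have measurable: "(\<lambda>y::real. y) \<in> borel_measurable (Gam x a)"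
    by (simp add: measurable_cong_sets[OF sets_Gam refl])
  have bounded: "AE y in Gam x a. \<bar>y\<bar> \<le> L"
    using Y_range by blast
  show "integrable (Gam x a) (\<lambda>y. y)"
    using measurable bounded by (intro integrable_const_bound[where B = L]) auto
  show "integrable (Gam x a) (\<lambda>y. y\<^sup>2)"
    by (rule integrable_square_of_AE_abs_le[OF measurable bounded])
qed

lemma abs_mu_star_le: "\<bar>mu_star Gam x a\<bar> \<le> L"
proof -
  interpret prob_space "Gam x a"
    by (rule prob_space_Gam)
  have "\<bar>mu_star Gam x a\<bar> \<le> (\<integral>y. \<bar>y\<bar> \<partial>Gam x a)"
    unfolding mu_star_def by (rule integral_abs_bound)
  also have "\<dots> \<le> (\<integral>y. L \<partial>Gam x a)"
    using Y_range integrable_Gam(1) by (intro integral_mono_AE) auto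
  finally show ?thesis
    using prob_space by simp
qed

lemma sigma_sq_eq: "sigma_sq Gam x a = (\<integral>y. y\<^sup>2 \<partial>Gam x a) - (mu_star Gam x a)\<^sup>2"
proof -
  interpret prob_space "Gam x a"
    by (rule prob_space_Gam)
  have "sigma_sq Gam x a = (\<integral>y. y\<^sup>2 - 2 * mu_star Gam x a * y + (mu_star Gam x a)\<^sup>2 \<partial>Gam x a)"
    unfolding sigma_sq_def by (simp add: power2_diff algebra_simps)
  also have "\<dots> = (\<integral>y. y\<^sup>2 \<partial>Gam x a) - (mu_star Gam x a)\<^sup>2"
    using integrable_Gam prob_space by (simp add: mu_star_def power2_eq_square)
  finally show ?thesis .
qed

lemma sigma_sq_nonneg: "0 \<le> sigma_sq Gam x a"
  unfolding sigma_sq_def by simp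

lemma mu_star_measurable: "(\<lambda>(x, a). mu_star Gam x a) \<in> borel_measurable (MX \<Otimes>\<^sub>M MA)"
  and sigma_sq_measurable: "(\<lambda>(x, a). sigma_sq Gam x a) \<in> borel_measurable (MX \<Otimes>\<^sub>M MA)"
proof -
  have "(\<lambda>z. \<integral>y. f y \<partial>case_prod Gam z) \<in> borel_measurable (MX \<Otimes>\<^sub>M MA)"
    if "f \<in> borel_measurable borel" for f :: "real \<Rightarrow> real"
    by (rule measurable_compose[OF Gam_measurable integral_measurable_subprob_algebra]) (simp add: that)
  from this[of "\<lambda>y. y"] this[of "\<lambda>y. y\<^sup>2"]
  show "(\<lambda>(x, a). mu_star Gam x a) \<in> borel_measurable (MX \<Otimes>\<^sub>M MA)"
    and "(\<lambda>(x, a). sigma_sq Gam x a) \<in> borel_measurable (MX \<Otimes>\<^sub>M MA)"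
    by (simp_all add: mu_star_def sigma_sq_eq split_beta')
qed

lemma measurable_g_comp [measurable]:
  "f \<in> measurable N MX \<Longrightarrow> k \<in> measurable N MA \<Longrightarrow> (\<lambda>\<omega>. g (f \<omega>) (k \<omega>)) \<in> borel_measurable N"
  using measurable_compose[OF measurable_Pair g_measurable] by simp

lemma measurable_mu_star_comp [measurable]:
  "f \<in> measurable N MX \<Longrightarrow> k \<in> measurable N MA \<Longrightarrow> (\<lambda>\<omega>. mu_star Gam (f \<omega>) (k \<omega>)) \<in> borel_measurable N"
  using measurable_compose[OF measurable_Pair mu_star_measurable] by simp

lemma measurable_sigma_sq_comp [measurable]:
  "f \<in> measurable N MX \<Longrightarrow> k \<in> measurable N MA \<Longrightarrow> (\<lambda>\<omega>. sigma_sq Gam (f \<omega>) (k \<omega>)) \<in> borel_measurable N"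
  using measurable_compose[OF measurable_Pair sigma_sq_measurable] by simp

lemma measurable_innerA:
  fixes k :: "'u \<Rightarrow> 'a \<Rightarrow> real"
  assumes "(\<lambda>(u, a). k u a) \<in> borel_measurable (N \<Otimes>\<^sub>M MA)"
  shows "(\<lambda>u. \<integral>a. k u a \<partial>lamA) \<in> borel_measurable N"
proof -
  interpret sigma_finite_measure lamA
    by (rule sigma_finite_lamA)
  have "(\<lambda>(u, a). k u a) \<in> borel_measurable (N \<Otimes>\<^sub>M lamA)"
    using assms by (simp add: measurable_cong_sets[OF sets_pair_measure_cong[OF refl sets_lamA] refl])
  then show ?thesis
    by (rule borel_measurable_lebesgue_integral)
qed

lemma inner_star_measurable: "inner_star \<in> borel_measurable MX"
  unfolding innerA_def by (rule measurable_innerA) (simp add: split_beta')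

lemma measurable_inner_star_comp [measurable]:
  assumes "f \<in> measurable N MX"
  shows "(\<lambda>\<omega>. inner_star (f \<omega>)) \<in> borel_measurable N"
  using measurable_compose[OF assms inner_star_measurable] .

lemma hist_measurable: "j \<le> n \<Longrightarrow> hist X A Y j \<in> measurable M (histM MX MA j)"
  unfolding hist_def histM_def using model_at(3-5) by (intro measurable_restrict) auto

lemma data_measurable:
  assumes "j < n"
  shows "hist X A Y j \<in> measurable M (histM MX MA j)" and "X j \<in> measurable M MX"
    and "A j \<in> measurable M MA" and "Y j \<in> borel_measurable M"
  using hist_measurable[of j] model_at(3-5)[OF assms] assms by auto

lemma fit_measurable:
  assumes "j < n"
  shows "(\<lambda>\<omega>. muhat j (hist X A Y j \<omega>) (X j \<omega>) (A j \<omega>)) \<in> borel_measurable M"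
proof -
  note [measurable] = data_measurable[OF assms]
  have "(\<lambda>\<omega>. (hist X A Y j \<omega>, X j \<omega>, A j \<omega>)) \<in> measurable M (histM MX MA j \<Otimes>\<^sub>M MX \<Otimes>\<^sub>M MA)"
    by measurable
  from measurable_compose[OF this muhat_measurable[rule_format, OF assms]] show ?thesis
    by simp
qed

lemma AE_abs_Y_le:
  assumes "j < n"
  shows "AE \<omega> in M. \<bar>Y j \<omega>\<bar> \<le> L"
proof -
  note [measurable] = data_measurable[OF assms]
  define S where "S = {y::real. L < \<bar>y\<bar>}"
  have [measurable]: "S \<in> sets borel"
    unfolding S_def by measurable
  have "(\<integral>\<^sup>+\<omega>. indicator S (Y j \<omega>) \<partial>M)
      = (\<integral>\<^sup>+\<omega>. (\<integral>\<^sup>+y. indicator S y \<partial>Gam (X j \<omega>) (A j \<omega>)) \<partial>M)"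
    using model_at(8)[OF assms, of "\<lambda>(_, _, _, y). indicator S y"] assms by simp
  also have "\<dots> = 0"
  proof -
    have "(\<integral>\<^sup>+y. indicator S y \<partial>Gam x a) = (\<integral>\<^sup>+y. 0 \<partial>Gam x a)" for x a
      using Y_range[rule_format, of x a] by (intro nn_integral_cong_AE) (auto simp: S_def elim!: eventually_mono)
    then show ?thesis
      by simp
  qed
  finally show ?thesis
    by (subst (asm) nn_integral_0_iff_AE) (auto simp: S_def indicator_def elim!: eventually_mono)
qed

definition aipw_increment where
  "aipw_increment j hh x a y =
     g x a / pol j x hh a * (y - muhat j hh x a) + innerA lamA (g x) (muhat j hh x) - target"

abbreviation "increment j \<omega> \<equiv> aipw_increment j (hist X A Y j \<omega>) (X j \<omega>) (A j \<omega>) (Y j \<omega>)"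

end

locale aipw_fitted = aipw_model +
  assumes residual_square_integrable:
    "\<forall>j<n. integrable M (\<lambda>\<omega>. (Y j \<omega> - muhat j (hist X A Y j \<omega>) (X j \<omega>) (A j \<omega>))\<^sup>2)"

section \<open>A single round\<close>

locale aipw_round = aipw_fitted +
  fixes i :: nat
  assumes round: "i < n"
begin

abbreviation "H \<equiv> hist X A Y i"
abbreviation "inner_hat hh x \<equiv> innerA lamA (g x) (muhat i hh x)"

lemma X_measurable [measurable]: "X i \<in> measurable M MX"
  and A_measurable [measurable]: "A i \<in> measurable M MA"
  and Y_measurable [measurable]: "Y i \<in> borel_measurable M"
  and pol_nonneg: "0 \<le> pol i x hh a"
  using model_at[OF round] by auto

lemma H_measurable [measurable]: "H \<in> measurable M (histM MX MA i)"
  using hist_measurable round by simp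

lemma measurable_pol_comp [measurable]:
  assumes "f \<in> measurable N MX" "h \<in> measurable N (histM MX MA i)" "k \<in> measurable N MA"
  shows "(\<lambda>\<omega>. pol i (f \<omega>) (h \<omega>) (k \<omega>)) \<in> borel_measurable N"
  using measurable_compose[OF measurable_Pair[OF assms(1) measurable_Pair[OF assms(2,3)]] model_at(1)[OF round]]
  by simp

lemma measurable_muhat_comp [measurable]:
  assumes "h \<in> measurable N (histM MX MA i)" "f \<in> measurable N MX" "k \<in> measurable N MA"
  shows "(\<lambda>\<omega>. muhat i (h \<omega>) (f \<omega>) (k \<omega>)) \<in> borel_measurable N"
proof -
  have "(\<lambda>(hh, x, a). muhat i hh x a) \<in> borel_measurable (histM MX MA i \<Otimes>\<^sub>M MX \<Otimes>\<^sub>M MA)"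
    using muhat_measurable round by blast
  from measurable_compose[OF measurable_Pair[OF assms(1) measurable_Pair[OF assms(2,3)]] this]
  show ?thesis
    by simp
qed

lemma inner_hat_measurable: "(\<lambda>(hh, x). inner_hat hh x) \<in> borel_measurable (histM MX MA i \<Otimes>\<^sub>M MX)"
  unfolding innerA_def split_beta' by (rule measurable_innerA) (simp add: split_beta', measurable)

lemma measurable_inner_hat_comp [measurable]:
  assumes "h \<in> measurable N (histM MX MA i)" "f \<in> measurable N MX"
  shows "(\<lambda>\<omega>. inner_hat (h \<omega>) (f \<omega>)) \<in> borel_measurable N"
  using measurable_compose[OF measurable_Pair[OF assms] inner_hat_measurable] by simp

sublocale cond_X: kernel_disintegration M "histM MX MA i" MX H "X i" "\<lambda>_. Xi" "\<lambda>_ _. 1"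
proof
  interpret sigma_finite_measure Xi
    using prob_space_Xi prob_space_imp_sigma_finite by blast
  fix h :: "_ \<Rightarrow> ennreal"
  assume "h \<in> borel_measurable (histM MX MA i \<Otimes>\<^sub>M MX)"
  then show "(\<lambda>u. \<integral>\<^sup>+x. h (u, x) \<partial>Xi) \<in> borel_measurable (histM MX MA i)"
    and "(\<integral>\<^sup>+\<omega>. h (H \<omega>, X i \<omega>) \<partial>M) = (\<integral>\<^sup>+\<omega>. (\<integral>\<^sup>+x. ennreal 1 * h (H \<omega>, x) \<partial>Xi) \<partial>M)"
    using borel_measurable_nn_integral[of "\<lambda>u x. h (u, x)"] model_at(6)[OF round]
    by (simp_all add: measurable_cong_sets[OF sets_pair_measure_cong[OF refl sets_Xi] refl])
qed (simp_all add: sets_Xi)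

sublocale cond_A: kernel_disintegration M "histM MX MA i \<Otimes>\<^sub>M MX" MA "\<lambda>\<omega>. (H \<omega>, X i \<omega>)" "A i"
  "\<lambda>_. lamA" "\<lambda>(hh, x) a. pol i x hh a"
proof
  interpret sigma_finite_measure lamA
    by (rule sigma_finite_lamA)
  fix h :: "_ \<Rightarrow> ennreal"
  assume h [measurable]: "h \<in> borel_measurable ((histM MX MA i \<Otimes>\<^sub>M MX) \<Otimes>\<^sub>M MA)"
  then show "(\<lambda>u. \<integral>\<^sup>+a. h (u, a) \<partial>lamA) \<in> borel_measurable (histM MX MA i \<Otimes>\<^sub>M MX)"
    using borel_measurable_nn_integral[of "\<lambda>u a. h (u, a)"]
    by (simp add: measurable_cong_sets[OF sets_pair_measure_cong[OF refl sets_lamA] refl])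
  have "(\<lambda>(hh, x, a). h ((hh, x), a)) \<in> borel_measurable (histM MX MA i \<Otimes>\<^sub>M MX \<Otimes>\<^sub>M MA)"
    by measurable
  from model_at(7)[OF round this]
  show "(\<integral>\<^sup>+\<omega>. h ((H \<omega>, X i \<omega>), A i \<omega>) \<partial>M)
      = (\<integral>\<^sup>+\<omega>. (\<integral>\<^sup>+a. ennreal ((\<lambda>(hh, x) a. pol i x hh a) (H \<omega>, X i \<omega>) a) * h ((H \<omega>, X i \<omega>), a) \<partial>lamA) \<partial>M)"
    by simp
qed (simp_all add: sets_lamA pol_nonneg split_beta')

sublocale cond_Y: kernel_disintegration M "histM MX MA i \<Otimes>\<^sub>M MX \<Otimes>\<^sub>M MA" borel
  "\<lambda>\<omega>. (H \<omega>, X i \<omega>, A i \<omega>)" "Y i" "\<lambda>(_, x, a). Gam x a" "\<lambda>_ _. 1"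
proof
  have kernel: "(\<lambda>(_, x, a). Gam x a) \<in> measurable (histM MX MA i \<Otimes>\<^sub>M MX \<Otimes>\<^sub>M MA) (subprob_algebra borel)"
    using measurable_compose[OF measurable_snd Gam_measurable] by (simp add: split_beta')
  fix h :: "_ \<times> real \<Rightarrow> ennreal"
  assume h [measurable]: "h \<in> borel_measurable ((histM MX MA i \<Otimes>\<^sub>M MX \<Otimes>\<^sub>M MA) \<Otimes>\<^sub>M borel)"
  show "(\<lambda>u. \<integral>\<^sup>+y. h (u, y) \<partial>(case u of (_, x, a) \<Rightarrow> Gam x a)) \<in> borel_measurable (histM MX MA i \<Otimes>\<^sub>M MX \<Otimes>\<^sub>M MA)"
    using nn_integral_measurable_subprob_algebra2[of "\<lambda>u y. h (u, y)", OF _ kernel] by simp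
  have "(\<lambda>(hh, x, a, y). h ((hh, x, a), y)) \<in> borel_measurable (histM MX MA i \<Otimes>\<^sub>M MX \<Otimes>\<^sub>M MA \<Otimes>\<^sub>M borel)"
    by measurable
  from model_at(8)[OF round this]
  show "(\<integral>\<^sup>+\<omega>. h ((H \<omega>, X i \<omega>, A i \<omega>), Y i \<omega>) \<partial>M)
      = (\<integral>\<^sup>+\<omega>. (\<integral>\<^sup>+y. ennreal 1 * h ((H \<omega>, X i \<omega>, A i \<omega>), y) \<partial>(case (H \<omega>, X i \<omega>, A i \<omega>) of (_, x, a) \<Rightarrow> Gam x a)) \<partial>M)"
    by simp
qed (simp_all add: sets_Gam split_beta')

abbreviation "cond_mean \<omega> \<equiv> mu_star Gam (X i \<omega>) (A i \<omega>)"
abbreviation "fit \<omega> \<equiv> muhat i (H \<omega>) (X i \<omega>) (A i \<omega>)"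

lemma AE_nn_integral_pol_eq_1: "AE \<omega> in M. (\<integral>\<^sup>+a. ennreal (pol i (X i \<omega>) (H \<omega>) a) \<partial>lamA) = 1"
proof -
  define C where "C = (\<lambda>u. \<integral>\<^sup>+a. ennreal (pol i (snd u) (fst u) a) \<partial>lamA)"
  have [measurable]: "C \<in> borel_measurable (histM MX MA i \<Otimes>\<^sub>M MX)"
    using cond_A.nn_integral_kernel_measurable[of "\<lambda>(u, a). ennreal (pol i (snd u) (fst u) a)"]
    by (simp add: C_def split_beta')
  \<comment> \<open>\<open>C\<close> is a density of the law \<open>\<nu>\<close> of \<open>(H, X i)\<close> with respect to \<open>\<nu>\<close> itself, hence 1 a.e.\<close>
  define \<nu> where "\<nu> = distr M (histM MX MA i \<Otimes>\<^sub>M MX) (\<lambda>\<omega>. (H \<omega>, X i \<omega>))"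
  interpret \<nu>: prob_space \<nu>
    unfolding \<nu>_def by (rule M.prob_space_distr) measurable
  have "AE u in \<nu>. C u = 1"
  proof (rule \<nu>.density_unique2)
    fix S assume S: "S \<in> sets \<nu>"
    have "(\<integral>\<^sup>+u\<in>S. C u \<partial>\<nu>) = (\<integral>\<^sup>+\<omega>. C (H \<omega>, X i \<omega>) * indicator S (H \<omega>, X i \<omega>) \<partial>M)"
      using S unfolding \<nu>_def by (subst nn_integral_distr) auto
    also have "\<dots> = (\<integral>\<^sup>+\<omega>. (\<integral>\<^sup>+a. ennreal (pol i (X i \<omega>) (H \<omega>) a) * indicator S (H \<omega>, X i \<omega>) \<partial>lamA) \<partial>M)"
    proof (rule nn_integral_cong)
      fix \<omega>
      show "C (H \<omega>, X i \<omega>) * indicator S (H \<omega>, X i \<omega>)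
          = (\<integral>\<^sup>+a. ennreal (pol i (X i \<omega>) (H \<omega>) a) * indicator S (H \<omega>, X i \<omega>) \<partial>lamA)"
        by (cases "(H \<omega>, X i \<omega>) \<in> S") (simp_all add: C_def)
    qed
    also have "\<dots> = (\<integral>\<^sup>+\<omega>. indicator S (H \<omega>, X i \<omega>) \<partial>M)"
      using cond_A.nn_integral_disintegration[of "\<lambda>(u, a). indicator S u"] S by (simp add: \<nu>_def)
    also have "\<dots> = (\<integral>\<^sup>+u\<in>S. 1 \<partial>\<nu>)"
      using S unfolding \<nu>_def by (subst nn_integral_distr) auto
    finally show "(\<integral>\<^sup>+u\<in>S. C u \<partial>\<nu>) = (\<integral>\<^sup>+u\<in>S. 1 \<partial>\<nu>)" .
  qed (auto simp: \<nu>_def)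
  then have "AE \<omega> in M. C (H \<omega>, X i \<omega>) = 1"
    unfolding \<nu>_def by (subst (asm) AE_distr_iff) auto
  then show ?thesis
    by (simp add: C_def)
qed

lemma AE_policy_normalized:
  "AE \<omega> in M. integrable lamA (pol i (X i \<omega>) (H \<omega>)) \<and> (\<integral>a. pol i (X i \<omega>) (H \<omega>) a \<partial>lamA) = 1"
  using AE_nn_integral_pol_eq_1
proof (rule AE_mp[OF _ AE_I2], intro impI conjI)
  fix \<omega> assume \<omega>: "\<omega> \<in> space M" and normalized: "(\<integral>\<^sup>+a. ennreal (pol i (X i \<omega>) (H \<omega>) a) \<partial>lamA) = 1"
  have "pol i (X i \<omega>) (H \<omega>) \<in> borel_measurable MA"
    using measurable_space[OF X_measurable \<omega>] measurable_space[OF H_measurable \<omega>]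
    by (intro measurable_pol_comp measurable_const measurable_ident_sets) auto
  then have "pol i (X i \<omega>) (H \<omega>) \<in> borel_measurable lamA"
    by (simp add: measurable_cong_sets[OF sets_lamA refl])
  with normalized show "integrable lamA (pol i (X i \<omega>) (H \<omega>))"
    and "(\<integral>a. pol i (X i \<omega>) (H \<omega>) a \<partial>lamA) = 1"
    by (auto simp: pol_nonneg integral_eq_nn_integral intro!: integrableI_nonneg)
qed

lemma integral_mult_response:
  fixes \<phi> :: "_ \<Rightarrow> real" and h :: "_ \<Rightarrow> _ \<Rightarrow> real \<Rightarrow> real"
  assumes [measurable]: "\<phi> \<in> borel_measurable (histM MX MA i \<Otimes>\<^sub>M MX \<Otimes>\<^sub>M MA)"
    and \<phi>_integrable: "integrable M (\<lambda>\<omega>. \<phi> (H \<omega>, X i \<omega>, A i \<omega>))"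
    and h_measurable [measurable]: "(\<lambda>(x, a, y). h x a y) \<in> borel_measurable (MX \<Otimes>\<^sub>M MA \<Otimes>\<^sub>M borel)"
    and h_bounded: "\<And>x a y. \<bar>y\<bar> \<le> L \<Longrightarrow> \<bar>h x a y\<bar> \<le> K"
    and c_measurable [measurable]: "(\<lambda>(x, a). c x a) \<in> borel_measurable (MX \<Otimes>\<^sub>M MA)"
    and c_eq: "\<And>x a. (\<integral>y. h x a y \<partial>Gam x a) = c x a"
  shows "(\<integral>\<omega>. \<phi> (H \<omega>, X i \<omega>, A i \<omega>) * h (X i \<omega>) (A i \<omega>) (Y i \<omega>) \<partial>M)
       = (\<integral>\<omega>. \<phi> (H \<omega>, X i \<omega>, A i \<omega>) * c (X i \<omega>) (A i \<omega>) \<partial>M)"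
proof -
  define f where "f = (\<lambda>((hh, x, a), y). \<phi> (hh, x, a) * h x a y)"
  have "(\<lambda>z. (fst (snd (fst z)), snd (snd (fst z)), snd z))
      \<in> measurable ((histM MX MA i \<Otimes>\<^sub>M MX \<Otimes>\<^sub>M MA) \<Otimes>\<^sub>M borel) (MX \<Otimes>\<^sub>M MA \<Otimes>\<^sub>M borel)"
    by measurable
  from measurable_compose[OF this h_measurable]
  have [measurable]: "(\<lambda>z. h (fst (snd (fst z))) (snd (snd (fst z))) (snd z))
      \<in> borel_measurable ((histM MX MA i \<Otimes>\<^sub>M MX \<Otimes>\<^sub>M MA) \<Otimes>\<^sub>M borel)"
    by simp
  have [measurable]: "f \<in> borel_measurable ((histM MX MA i \<Otimes>\<^sub>M MX \<Otimes>\<^sub>M MA) \<Otimes>\<^sub>M borel)"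
    unfolding f_def split_beta' by measurable
  have "integrable M (\<lambda>\<omega>. f ((H \<omega>, X i \<omega>, A i \<omega>), Y i \<omega>))"
  proof (rule Bochner_Integration.integrable_bound[OF integrable_mult_right[OF \<phi>_integrable, of K]])
    show "AE \<omega> in M. norm (f ((H \<omega>, X i \<omega>, A i \<omega>), Y i \<omega>)) \<le> norm (K * \<phi> (H \<omega>, X i \<omega>, A i \<omega>))"
      using AE_abs_Y_le[OF round]
    proof eventually_elim
      case (elim \<omega>)
      then have "\<bar>\<phi> (H \<omega>, X i \<omega>, A i \<omega>)\<bar> * \<bar>h (X i \<omega>) (A i \<omega>) (Y i \<omega>)\<bar> \<le> \<bar>\<phi> (H \<omega>, X i \<omega>, A i \<omega>)\<bar> * \<bar>K\<bar>"
        by (intro mult_left_mono order_trans[OF h_bounded abs_ge_self]) auto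
      then show ?case
        by (simp add: f_def abs_mult mult.commute)
    qed
  qed simp
  moreover have "(\<integral>y. 1 * f (u, y) \<partial>(case u of (_, x, a) \<Rightarrow> Gam x a)) = (\<lambda>(hh, x, a). \<phi> (hh, x, a) * c x a) u" for u
    by (cases u) (simp add: f_def c_eq)
  ultimately have "(\<integral>\<omega>. f ((H \<omega>, X i \<omega>, A i \<omega>), Y i \<omega>) \<partial>M)
      = (\<integral>\<omega>. (\<lambda>(hh, x, a). \<phi> (hh, x, a) * c x a) (H \<omega>, X i \<omega>, A i \<omega>) \<partial>M)"
    by (intro cond_Y.integral_disintegration_pointwise(1)) (auto simp: split_beta')
  then show ?thesis
    by (simp add: f_def)
qed

lemma integral_mult_noise_eq_0:
  fixes \<phi> :: "_ \<Rightarrow> real"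
  assumes "\<phi> \<in> borel_measurable (histM MX MA i \<Otimes>\<^sub>M MX \<Otimes>\<^sub>M MA)"
    and "integrable M (\<lambda>\<omega>. \<phi> (H \<omega>, X i \<omega>, A i \<omega>))"
  shows "(\<integral>\<omega>. \<phi> (H \<omega>, X i \<omega>, A i \<omega>) * (Y i \<omega> - cond_mean \<omega>) \<partial>M) = 0"
proof -
  have "(\<integral>y. y - mu_star Gam x a \<partial>Gam x a) = 0" for x a
  proof -
    interpret prob_space "Gam x a"
      by (rule prob_space_Gam)
    show ?thesis
      using integrable_Gam(1) prob_space by (simp add: mu_star_def)
  qed
  then have "(\<integral>\<omega>. \<phi> (H \<omega>, X i \<omega>, A i \<omega>) * (Y i \<omega> - cond_mean \<omega>) \<partial>M)
      = (\<integral>\<omega>. \<phi> (H \<omega>, X i \<omega>, A i \<omega>) * 0 \<partial>M)"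
  proof (intro integral_mult_response[OF assms, where h = "\<lambda>x a y. y - mu_star Gam x a" and c = "\<lambda>_ _. 0"])
    show "\<bar>y - mu_star Gam x a\<bar> \<le> 2 * L" if "\<bar>y\<bar> \<le> L" for x a y
      using that abs_mu_star_le[of x a] by linarith
  qed (simp_all add: split_beta' measurable_mu_star_comp)
  then show ?thesis
    by simp
qed

lemma integral_mult_noise_square:
  fixes \<psi> :: "_ \<Rightarrow> real"
  assumes "\<psi> \<in> borel_measurable (histM MX MA i \<Otimes>\<^sub>M MX \<Otimes>\<^sub>M MA)"
    and "integrable M (\<lambda>\<omega>. \<psi> (H \<omega>, X i \<omega>, A i \<omega>))"
  shows "(\<integral>\<omega>. \<psi> (H \<omega>, X i \<omega>, A i \<omega>) * (Y i \<omega> - cond_mean \<omega>)\<^sup>2 \<partial>M)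
       = (\<integral>\<omega>. \<psi> (H \<omega>, X i \<omega>, A i \<omega>) * sigma_sq Gam (X i \<omega>) (A i \<omega>) \<partial>M)"
proof (rule integral_mult_response[OF assms, where K = "(2 * L)\<^sup>2" and c = "sigma_sq Gam"])
  show "\<bar>(y - mu_star Gam x a)\<^sup>2\<bar> \<le> (2 * L)\<^sup>2" if "\<bar>y\<bar> \<le> L" for x a y
  proof -
    have "\<bar>y - mu_star Gam x a\<bar> \<le> 2 * L"
      using that abs_mu_star_le[of x a] by linarith
    from power2_le_of_abs_le[OF this] show ?thesis
      by simp
  qed
qed (fact sigma_sq_measurable | simp add: sigma_sq_def split_beta')+

lemma integrable_inner_star_Xi: "integrable Xi inner_star"
proof -
  interpret prob_space Xi
    by (rule prob_space_Xi)
  have "inner_star \<in> borel_measurable Xi"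
    using inner_star_measurable by (simp add: measurable_cong_sets[OF sets_Xi refl])
  then show ?thesis
    using square_integrable_inner_star by (rule square_integrable_imp_integrable)
qed

lemma square_integrable_inner_star_X: "integrable M (\<lambda>\<omega>. (inner_star (X i \<omega>))\<^sup>2)"
proof -
  have "(\<integral>\<^sup>+\<omega>. ennreal ((inner_star (X i \<omega>))\<^sup>2) \<partial>M) = (\<integral>\<^sup>+\<omega>. (\<integral>\<^sup>+x. ennreal ((inner_star x)\<^sup>2) \<partial>Xi) \<partial>M)"
    using cond_X.nn_integral_disintegration[of "\<lambda>(_, x). ennreal ((inner_star x)\<^sup>2)"] by simp
  also have "\<dots> = (\<integral>\<^sup>+x. ennreal ((inner_star x)\<^sup>2) \<partial>Xi)"
    by (simp add: M.emeasure_space_1)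
  also have "\<dots> < \<infinity>"
    using square_integrable_inner_star by (simp add: integrable_iff_bounded)
  finally show ?thesis
    by (intro integrableI_nonneg) simp_all
qed

lemma integral_history_mult_centered_inner_eq_0:
  fixes Z :: "_ \<Rightarrow> real"
  assumes [measurable]: "Z \<in> borel_measurable (histM MX MA i)"
    and "integrable M (\<lambda>\<omega>. (Z (H \<omega>))\<^sup>2)"
  shows "(\<integral>\<omega>. Z (H \<omega>) * (inner_star (X i \<omega>) - target) \<partial>M) = 0"
proof -
  interpret Xi: prob_space Xi
    by (rule prob_space_Xi)
  have "integrable M (\<lambda>\<omega>. (inner_star (X i \<omega>) - target)\<^sup>2)"
    using square_integrable_inner_star_X by (intro integrable_square_diff) auto
  then have "integrable M (\<lambda>\<omega>. Z (H \<omega>) * (inner_star (X i \<omega>) - target))"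
    using assms(2) by (intro integrable_mult_of_square_integrable) auto
  moreover have "(\<integral>x. inner_star x - target \<partial>Xi) = 0"
    using integrable_inner_star_Xi Xi.prob_space by (simp add: tau_def)
  ultimately have "(\<integral>\<omega>. (\<lambda>(hh, x). Z hh * (inner_star x - target)) (H \<omega>, X i \<omega>) \<partial>M) = (\<integral>\<omega>. 0 \<partial>M)"
    by (intro cond_X.integral_disintegration_pointwise(1)[where e = "\<lambda>_. 0"]) (auto simp: split_beta')
  then show ?thesis
    by simp
qed

lemma integral_centered_inner_square:
  "(\<integral>\<omega>. (inner_star (X i \<omega>) - target)\<^sup>2 \<partial>M) = (\<integral>x. (inner_star x - target)\<^sup>2 \<partial>Xi)"
proof -
  have "integrable M (\<lambda>\<omega>. (inner_star (X i \<omega>) - target)\<^sup>2)"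
    using square_integrable_inner_star_X by (intro integrable_square_diff) auto
  then have "(\<integral>\<omega>. (\<lambda>(_, x). (inner_star x - target)\<^sup>2) (H \<omega>, X i \<omega>) \<partial>M)
      = (\<integral>\<omega>. (\<lambda>_. \<integral>x. (inner_star x - target)\<^sup>2 \<partial>Xi) (H \<omega>) \<partial>M)"
    by (intro cond_X.integral_disintegration_pointwise(1)) (auto simp: split_beta')
  then show ?thesis
    using M.prob_space by simp
qed

lemma measurable_cond_A:
  fixes u :: "_ \<Rightarrow> real"
  assumes [measurable]: "u \<in> borel_measurable ((histM MX MA i \<Otimes>\<^sub>M MX) \<Otimes>\<^sub>M MA)"
  shows "(\<lambda>\<omega>. \<integral>a. pol i (X i \<omega>) (H \<omega>) a * u ((H \<omega>, X i \<omega>), a) \<partial>lamA) \<in> borel_measurable M"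
proof -
  have "(\<lambda>(v, a). pol i (snd v) (fst v) a * u (v, a)) \<in> borel_measurable ((histM MX MA i \<Otimes>\<^sub>M MX) \<Otimes>\<^sub>M MA)"
    unfolding split_beta' by measurable
  from measurable_compose[OF _ measurable_innerA[OF this], of "\<lambda>\<omega>. (H \<omega>, X i \<omega>)"]
  show ?thesis
    by simp
qed

lemma square_integrable_cond_A:
  fixes u :: "_ \<Rightarrow> real"
  assumes u_measurable [measurable]: "u \<in> borel_measurable ((histM MX MA i \<Otimes>\<^sub>M MX) \<Otimes>\<^sub>M MA)"
    and u_square: "integrable M (\<lambda>\<omega>. (u ((H \<omega>, X i \<omega>), A i \<omega>))\<^sup>2)"
    and u_slices: "\<And>hh x. integrable lamA (\<lambda>a. pol i x hh a * u ((hh, x), a))"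
  shows "integrable M (\<lambda>\<omega>. (\<integral>a. pol i (X i \<omega>) (H \<omega>) a * u ((H \<omega>, X i \<omega>), a) \<partial>lamA)\<^sup>2)"
proof -
  define Q where "Q = (\<lambda>\<omega>. \<integral>a. pol i (X i \<omega>) (H \<omega>) a * (u ((H \<omega>, X i \<omega>), a))\<^sup>2 \<partial>lamA)"
  have Q_measurable [measurable]: "Q \<in> borel_measurable M"
    unfolding Q_def using measurable_cond_A[of "\<lambda>z. (u z)\<^sup>2"] by simp
  have cond_measurable: "(\<lambda>\<omega>. \<integral>a. pol i (X i \<omega>) (H \<omega>) a * u ((H \<omega>, X i \<omega>), a) \<partial>lamA) \<in> borel_measurable M"
    by (rule measurable_cond_A[OF u_measurable])
  have square_measurable: "(\<lambda>z. (u z)\<^sup>2) \<in> borel_measurable ((histM MX MA i \<Otimes>\<^sub>M MX) \<Otimes>\<^sub>M MA)"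
    by measurable
  have "AE \<omega> in M. integrable lamA (\<lambda>a. (case (H \<omega>, X i \<omega>) of (hh, x) \<Rightarrow> \<lambda>a. pol i x hh a) a * (u ((H \<omega>, X i \<omega>), a))\<^sup>2)
      \<longrightarrow> (\<integral>a. (case (H \<omega>, X i \<omega>) of (hh, x) \<Rightarrow> \<lambda>a. pol i x hh a) a * (u ((H \<omega>, X i \<omega>), a))\<^sup>2 \<partial>lamA) = Q \<omega>"
    by (simp add: Q_def)
  note Q_disintegration = cond_A.integral_disintegration(1,2)[OF square_measurable u_square Q_measurable this]
  have Q_integrable: "integrable M Q"
    by (rule Q_disintegration(2))
  have "AE \<omega> in M. integrable lamA (\<lambda>a. pol i (X i \<omega>) (H \<omega>) a * (u ((H \<omega>, X i \<omega>), a))\<^sup>2)"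
    using Q_disintegration(1) by simp
  then have "AE \<omega> in M. norm ((\<integral>a. pol i (X i \<omega>) (H \<omega>) a * u ((H \<omega>, X i \<omega>), a) \<partial>lamA)\<^sup>2) \<le> norm (Q \<omega>)"
    using AE_policy_normalized
  proof eventually_elim
    case (elim \<omega>)
    then have "(\<integral>a. pol i (X i \<omega>) (H \<omega>) a * u ((H \<omega>, X i \<omega>), a) \<partial>lamA)\<^sup>2 \<le> Q \<omega>"
      unfolding Q_def by (intro weighted_integral_square_le) (simp_all add: pol_nonneg u_slices)
    then show ?case
      by simp
  qed
  with cond_measurable show ?thesis
    by (intro Bochner_Integration.integrable_bound[OF Q_integrable] borel_measurable_power)
qed

lemma integral_mult_cond_A:
  fixes u \<psi> :: "_ \<Rightarrow> real"
  assumes [measurable]: "u \<in> borel_measurable ((histM MX MA i \<Otimes>\<^sub>M MX) \<Otimes>\<^sub>M MA)"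
    and u_square: "integrable M (\<lambda>\<omega>. (u ((H \<omega>, X i \<omega>), A i \<omega>))\<^sup>2)"
    and [measurable]: "\<psi> \<in> borel_measurable (histM MX MA i \<Otimes>\<^sub>M MX)"
    and \<psi>_square: "integrable M (\<lambda>\<omega>. (\<psi> (H \<omega>, X i \<omega>))\<^sup>2)"
  shows "(\<integral>\<omega>. \<psi> (H \<omega>, X i \<omega>) * u ((H \<omega>, X i \<omega>), A i \<omega>) \<partial>M)
       = (\<integral>\<omega>. \<psi> (H \<omega>, X i \<omega>) * (\<integral>a. pol i (X i \<omega>) (H \<omega>) a * u ((H \<omega>, X i \<omega>), a) \<partial>lamA) \<partial>M)"
proof -
  define e where "e = (\<lambda>v. \<psi> v * (\<integral>a. pol i (snd v) (fst v) a * u (v, a) \<partial>lamA))"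
  have "(\<lambda>(v, a). pol i (snd v) (fst v) a * u (v, a)) \<in> borel_measurable ((histM MX MA i \<Otimes>\<^sub>M MX) \<Otimes>\<^sub>M MA)"
    unfolding split_beta' by measurable
  from measurable_innerA[OF this] have [measurable]: "e \<in> borel_measurable (histM MX MA i \<Otimes>\<^sub>M MX)"
    unfolding e_def by measurable
  have "(\<integral>\<omega>. (\<lambda>(v, a). \<psi> v * u (v, a)) ((H \<omega>, X i \<omega>), A i \<omega>) \<partial>M) = (\<integral>\<omega>. e (H \<omega>, X i \<omega>) \<partial>M)"
  proof (rule cond_A.integral_disintegration_pointwise(1))
    show "(\<lambda>(v, a). \<psi> v * u (v, a)) \<in> borel_measurable ((histM MX MA i \<Otimes>\<^sub>M MX) \<Otimes>\<^sub>M MA)"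
      unfolding split_beta' by measurable
  next
    fix v
    show "(\<integral>a. (\<lambda>(hh, x) a. pol i x hh a) v a * (\<lambda>(v, a). \<psi> v * u (v, a)) (v, a) \<partial>lamA) = e v"
      by (simp add: e_def split_beta' mult.left_commute)
  next
    show "integrable M (\<lambda>\<omega>. (\<lambda>(v, a). \<psi> v * u (v, a)) ((H \<omega>, X i \<omega>), A i \<omega>))"
      using \<psi>_square u_square by (simp add: integrable_mult_of_square_integrable)
  qed fact
  then show ?thesis
    by (simp add: e_def)
qed

definition "weight \<omega> = g (X i \<omega>) (A i \<omega>) / pol i (X i \<omega>) (H \<omega>) (A i \<omega>)"
definition "noise \<omega> = weight \<omega> * (Y i \<omega> - cond_mean \<omega>)"
definition "bias \<omega> = weight \<omega> * (cond_mean \<omega> - fit \<omega>)"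
definition "cond_bias \<omega> = inner_star (X i \<omega>) - inner_hat (H \<omega>) (X i \<omega>)"
definition "centered \<omega> = inner_star (X i \<omega>) - target"

lemma weight_measurable [measurable]: "weight \<in> borel_measurable M"
  unfolding weight_def by measurable

lemma noise_measurable [measurable]: "noise \<in> borel_measurable M"
  unfolding noise_def by measurable

lemma bias_measurable [measurable]: "bias \<in> borel_measurable M"
  unfolding bias_def by measurable

lemma cond_bias_measurable [measurable]: "cond_bias \<in> borel_measurable M"
  unfolding cond_bias_def by measurable

lemma centered_measurable [measurable]: "centered \<in> borel_measurable M"
  unfolding centered_def by measurable

lemma increment_decomposition: "increment i \<omega> = noise \<omega> + ((bias \<omega> - cond_bias \<omega>) + centered \<omega>)"
  unfolding aipw_increment_def noise_def bias_def cond_bias_def centered_def weight_def right_diff_distrib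
  by linarith

lemma AE_abs_weight_le: "AE \<omega> in M. \<bar>weight \<omega>\<bar> \<le> B"
  using overlap round by (auto simp: weight_def)

lemma square_integrable_weight: "integrable M (\<lambda>\<omega>. (weight \<omega>)\<^sup>2)"
  using AE_abs_weight_le by (rule M.integrable_square_of_AE_abs_le[rotated]) measurable

lemma square_integrable_Y: "integrable M (\<lambda>\<omega>. (Y i \<omega>)\<^sup>2)"
  using AE_abs_Y_le[OF round] by (rule M.integrable_square_of_AE_abs_le[rotated]) measurable

lemma square_integrable_cond_mean: "integrable M (\<lambda>\<omega>. (cond_mean \<omega>)\<^sup>2)"
proof -
  have "AE \<omega> in M. \<bar>cond_mean \<omega>\<bar> \<le> L"
    using abs_mu_star_le by simp
  then show ?thesis
    by (rule M.integrable_square_of_AE_abs_le[rotated]) measurable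
qed

lemma square_integrable_fit: "integrable M (\<lambda>\<omega>. (fit \<omega>)\<^sup>2)"
  using integrable_square_diff[OF _ _ square_integrable_Y residual_square_integrable[rule_format, OF round]]
  by simp

lemma square_integrable_cond_mean_diff_fit: "integrable M (\<lambda>\<omega>. (cond_mean \<omega> - fit \<omega>)\<^sup>2)"
  using square_integrable_cond_mean square_integrable_fit by (rule integrable_square_diff[rotated 2]) simp_all

lemma square_integrable_noise: "integrable M (\<lambda>\<omega>. (noise \<omega>)\<^sup>2)"
proof -
  have "integrable M (\<lambda>\<omega>. (Y i \<omega> - cond_mean \<omega>)\<^sup>2)"
    using square_integrable_Y square_integrable_cond_mean by (rule integrable_square_diff[rotated 2]) simp_all
  then show ?thesis
    unfolding noise_def by (rule integrable_square_mult_of_AE_abs_le[rotated 2, OF _ AE_abs_weight_le]) simp_all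
qed

lemma square_integrable_bias: "integrable M (\<lambda>\<omega>. (bias \<omega>)\<^sup>2)"
  unfolding bias_def using square_integrable_cond_mean_diff_fit
  by (rule integrable_square_mult_of_AE_abs_le[rotated 2, OF _ AE_abs_weight_le]) simp_all

lemma square_integrable_centered: "integrable M (\<lambda>\<omega>. (centered \<omega>)\<^sup>2)"
  unfolding centered_def using square_integrable_inner_star_X
  by (rule integrable_square_diff[rotated 2]) simp_all

text \<open>Where \<open>\<pi> = 0\<close>, coverage forces \<open>g = 0\<close>, so the junk value \<open>g / 0 = 0\<close> is harmless.\<close>

lemma pol_mult_weight: "pol i x hh a * (g x a / pol i x hh a * t) = g x a * t"
proof (cases "g x a = 0")
  case False
  with coverage round have "0 < pol i x hh a"
    by auto
  then show ?thesis
    by simp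
qed simp

definition "bias_fn = (\<lambda>((hh, x), a). g x a / pol i x hh a * (mu_star Gam x a - muhat i hh x a))"

lemma bias_fn_measurable: "bias_fn \<in> borel_measurable ((histM MX MA i \<Otimes>\<^sub>M MX) \<Otimes>\<^sub>M MA)"
  unfolding bias_fn_def split_beta' by measurable

lemma bias_eq_bias_fn: "bias \<omega> = bias_fn ((H \<omega>, X i \<omega>), A i \<omega>)"
  by (simp add: bias_def weight_def bias_fn_def)

lemma integral_pol_mult_bias_fn:
  "integrable lamA (\<lambda>a. pol i x hh a * bias_fn ((hh, x), a))"
  "(\<integral>a. pol i x hh a * bias_fn ((hh, x), a) \<partial>lamA) = inner_star x - inner_hat hh x"
  unfolding bias_fn_def case_prod_conv pol_mult_weight right_diff_distrib
  using integrable_inner_mu_star integrable_inner_muhat round by (simp_all add: innerA_def)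

lemma square_integrable_cond_bias: "integrable M (\<lambda>\<omega>. (cond_bias \<omega>)\<^sup>2)"
  using square_integrable_cond_A[OF bias_fn_measurable] square_integrable_bias
  by (simp add: bias_eq_bias_fn integral_pol_mult_bias_fn cond_bias_def)

lemma integral_mult_bias_deviation_eq_0:
  fixes \<psi> :: "_ \<Rightarrow> real"
  assumes [measurable]: "\<psi> \<in> borel_measurable (histM MX MA i \<Otimes>\<^sub>M MX)"
    and \<psi>_square: "integrable M (\<lambda>\<omega>. (\<psi> (H \<omega>, X i \<omega>))\<^sup>2)"
  shows "(\<integral>\<omega>. \<psi> (H \<omega>, X i \<omega>) * (bias \<omega> - cond_bias \<omega>) \<partial>M) = 0"
proof -
  have "integrable M (\<lambda>\<omega>. \<psi> (H \<omega>, X i \<omega>) * bias \<omega>)"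
    using \<psi>_square square_integrable_bias by (rule integrable_mult_of_square_integrable[rotated 2]) simp_all
  moreover have "integrable M (\<lambda>\<omega>. \<psi> (H \<omega>, X i \<omega>) * cond_bias \<omega>)"
    using \<psi>_square square_integrable_cond_bias by (rule integrable_mult_of_square_integrable[rotated 2]) simp_all
  moreover have "(\<integral>\<omega>. \<psi> (H \<omega>, X i \<omega>) * bias \<omega> \<partial>M) = (\<integral>\<omega>. \<psi> (H \<omega>, X i \<omega>) * cond_bias \<omega> \<partial>M)"
    using integral_mult_cond_A[OF bias_fn_measurable _ assms] square_integrable_bias
    by (simp add: bias_eq_bias_fn integral_pol_mult_bias_fn cond_bias_def)
  ultimately show ?thesis
    by (simp add: right_diff_distrib)
qed

lemma integral_mult_noise_term_eq_0:
  fixes \<phi> :: "_ \<Rightarrow> real"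
  assumes [measurable]: "\<phi> \<in> borel_measurable (histM MX MA i \<Otimes>\<^sub>M MX \<Otimes>\<^sub>M MA)"
    and \<phi>_square: "integrable M (\<lambda>\<omega>. (\<phi> (H \<omega>, X i \<omega>, A i \<omega>))\<^sup>2)"
  shows "(\<integral>\<omega>. \<phi> (H \<omega>, X i \<omega>, A i \<omega>) * noise \<omega> \<partial>M) = 0"
proof -
  define \<phi>' where "\<phi>' = (\<lambda>(hh, x, a). \<phi> (hh, x, a) * (g x a / pol i x hh a))"
  have "\<phi>' \<in> borel_measurable (histM MX MA i \<Otimes>\<^sub>M MX \<Otimes>\<^sub>M MA)"
    unfolding \<phi>'_def split_beta' by measurable
  moreover have "integrable M (\<lambda>\<omega>. \<phi>' (H \<omega>, X i \<omega>, A i \<omega>))"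
    using integrable_mult_of_square_integrable[OF _ _ \<phi>_square square_integrable_weight]
    by (simp add: \<phi>'_def weight_def)
  ultimately show ?thesis
    using integral_mult_noise_eq_0[of \<phi>'] by (simp add: \<phi>'_def noise_def weight_def mult.assoc)
qed

lemma square_integrable_bias_deviation: "integrable M (\<lambda>\<omega>. (bias \<omega> - cond_bias \<omega>)\<^sup>2)"
  using square_integrable_bias square_integrable_cond_bias by (rule integrable_square_diff[rotated 2]) simp_all

lemma square_integrable_increment: "integrable M (\<lambda>\<omega>. (increment i \<omega>)\<^sup>2)"
proof -
  have "integrable M (\<lambda>\<omega>. (bias \<omega> - cond_bias \<omega> + centered \<omega>)\<^sup>2)"
    using square_integrable_bias_deviation square_integrable_centered
    by (rule integrable_square_add[rotated 2]) simp_all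
  with square_integrable_noise show ?thesis
    unfolding increment_decomposition by (rule integrable_square_add[rotated 2]) simp_all
qed

lemma integral_increment_square:
  "(\<integral>\<omega>. (increment i \<omega>)\<^sup>2 \<partial>M)
     = (\<integral>\<omega>. (noise \<omega>)\<^sup>2 \<partial>M) + (\<integral>\<omega>. (bias \<omega> - cond_bias \<omega>)\<^sup>2 \<partial>M) + (\<integral>\<omega>. (centered \<omega>)\<^sup>2 \<partial>M)"
proof -
  define r where "r \<omega> = bias \<omega> - cond_bias \<omega>" for \<omega>
  have [measurable]: "r \<in> borel_measurable M"
    unfolding r_def by measurable
  have r_square: "integrable M (\<lambda>\<omega>. (r \<omega>)\<^sup>2)"
    unfolding r_def by (rule square_integrable_bias_deviation)
  have rest_square: "integrable M (\<lambda>\<omega>. (r \<omega> + centered \<omega>)\<^sup>2)"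
    using r_square square_integrable_centered by (rule integrable_square_add[rotated 2]) simp_all
  have "(\<integral>\<omega>. (\<lambda>(hh, x, a). bias_fn ((hh, x), a) - (inner_star x - inner_hat hh x) + (inner_star x - target))
      (H \<omega>, X i \<omega>, A i \<omega>) * noise \<omega> \<partial>M) = 0"
  proof (rule integral_mult_noise_term_eq_0)
    show "(\<lambda>(hh, x, a). bias_fn ((hh, x), a) - (inner_star x - inner_hat hh x) + (inner_star x - target))
        \<in> borel_measurable (histM MX MA i \<Otimes>\<^sub>M MX \<Otimes>\<^sub>M MA)"
      using bias_fn_measurable unfolding split_beta' by measurable
    show "integrable M (\<lambda>\<omega>. ((\<lambda>(hh, x, a). bias_fn ((hh, x), a) - (inner_star x - inner_hat hh x)
        + (inner_star x - target)) (H \<omega>, X i \<omega>, A i \<omega>))\<^sup>2)"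
      using rest_square by (simp add: r_def bias_eq_bias_fn cond_bias_def centered_def)
  qed
  then have "(\<integral>\<omega>. noise \<omega> * (r \<omega> + centered \<omega>) \<partial>M) = 0"
    by (simp add: r_def bias_eq_bias_fn cond_bias_def centered_def mult.commute)
  with square_integrable_noise rest_square
  have "(\<integral>\<omega>. (increment i \<omega>)\<^sup>2 \<partial>M) = (\<integral>\<omega>. (noise \<omega>)\<^sup>2 \<partial>M) + (\<integral>\<omega>. (r \<omega> + centered \<omega>)\<^sup>2 \<partial>M)"
    unfolding increment_decomposition r_def[symmetric] by (intro integral_square_add_orthogonal) simp_all
  also have "(\<integral>\<omega>. (r \<omega> + centered \<omega>)\<^sup>2 \<partial>M) = (\<integral>\<omega>. (r \<omega>)\<^sup>2 \<partial>M) + (\<integral>\<omega>. (centered \<omega>)\<^sup>2 \<partial>M)"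
  proof (rule integral_square_add_orthogonal[OF _ _ r_square square_integrable_centered])
    show "(\<integral>\<omega>. r \<omega> * centered \<omega> \<partial>M) = 0"
      using integral_mult_bias_deviation_eq_0[of "\<lambda>(_, x). inner_star x - target"] square_integrable_centered
      by (simp add: r_def centered_def mult.commute)
  qed simp_all
  finally show ?thesis
    by (simp add: r_def)
qed

lemma integral_bias_deviation_square:
  "(\<integral>\<omega>. (bias \<omega> - cond_bias \<omega>)\<^sup>2 \<partial>M) = (\<integral>\<omega>. (bias \<omega>)\<^sup>2 \<partial>M) - (\<integral>\<omega>. (cond_bias \<omega>)\<^sup>2 \<partial>M)"
proof -
  have "(\<integral>\<omega>. (bias \<omega> - cond_bias \<omega> + cond_bias \<omega>)\<^sup>2 \<partial>M)
      = (\<integral>\<omega>. (bias \<omega> - cond_bias \<omega>)\<^sup>2 \<partial>M) + (\<integral>\<omega>. (cond_bias \<omega>)\<^sup>2 \<partial>M)"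
  proof (rule integral_square_add_orthogonal[OF _ _ square_integrable_bias_deviation square_integrable_cond_bias])
    show "(\<integral>\<omega>. (bias \<omega> - cond_bias \<omega>) * cond_bias \<omega> \<partial>M) = 0"
      using integral_mult_bias_deviation_eq_0[of "\<lambda>(hh, x). inner_star x - inner_hat hh x"]
        square_integrable_cond_bias
      by (simp add: cond_bias_def split_beta' mult.commute)
  qed simp_all
  then show ?thesis
    by simp
qed

lemma integral_noise_square:
  "(\<integral>\<omega>. (noise \<omega>)\<^sup>2 \<partial>M) = (\<integral>\<omega>. (weight \<omega>)\<^sup>2 * sigma_sq Gam (X i \<omega>) (A i \<omega>) \<partial>M)"
proof -
  have "(\<lambda>(hh, x, a). (g x a / pol i x hh a)\<^sup>2) \<in> borel_measurable (histM MX MA i \<Otimes>\<^sub>M MX \<Otimes>\<^sub>M MA)"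
    unfolding split_beta' by measurable
  from integral_mult_noise_square[OF this] square_integrable_weight show ?thesis
    by (simp add: noise_def power_mult_distrib flip: weight_def)
qed

lemma integral_bias_square_le:
  "(\<integral>\<omega>. (bias \<omega>)\<^sup>2 \<partial>M) \<le> B\<^sup>2 * (\<integral>\<omega>. (cond_mean \<omega> - fit \<omega>)\<^sup>2 \<partial>M)"
proof -
  have "AE \<omega> in M. (bias \<omega>)\<^sup>2 \<le> B\<^sup>2 * (cond_mean \<omega> - fit \<omega>)\<^sup>2"
    using AE_abs_weight_le
    by eventually_elim (simp add: bias_def power_mult_distrib mult_right_mono power2_le_of_abs_le)
  then have "(\<integral>\<omega>. (bias \<omega>)\<^sup>2 \<partial>M) \<le> (\<integral>\<omega>. B\<^sup>2 * (cond_mean \<omega> - fit \<omega>)\<^sup>2 \<partial>M)"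
    using square_integrable_bias square_integrable_cond_mean_diff_fit by (intro integral_mono_AE) simp_all
  then show ?thesis
    by simp
qed

lemma integral_increment_square_le:
  "(\<integral>\<omega>. (increment i \<omega>)\<^sup>2 \<partial>M)
     \<le> (\<integral>x. (inner_star x - target)\<^sup>2 \<partial>Xi)
       + (\<integral>\<omega>. (weight \<omega>)\<^sup>2 * sigma_sq Gam (X i \<omega>) (A i \<omega>) \<partial>M)
       + B\<^sup>2 * (\<integral>\<omega>. (cond_mean \<omega> - fit \<omega>)\<^sup>2 \<partial>M)"
proof -
  have "0 \<le> (\<integral>\<omega>. (cond_bias \<omega>)\<^sup>2 \<partial>M)"
    by simp
  moreover have "(\<integral>\<omega>. (centered \<omega>)\<^sup>2 \<partial>M) = (\<integral>x. (inner_star x - target)\<^sup>2 \<partial>Xi)"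
    unfolding centered_def by (rule integral_centered_inner_square)
  ultimately show ?thesis
    using integral_increment_square integral_bias_deviation_square integral_noise_square
      integral_bias_square_le
    by linarith
qed

lemma integral_history_mult_increment_eq_0:
  fixes Z :: "_ \<Rightarrow> real"
  assumes [measurable]: "Z \<in> borel_measurable (histM MX MA i)"
    and Z_square: "integrable M (\<lambda>\<omega>. (Z (H \<omega>))\<^sup>2)"
  shows "(\<integral>\<omega>. Z (H \<omega>) * increment i \<omega> \<partial>M) = 0"
proof -
  have "(\<lambda>\<omega>. Z (H \<omega>)) \<in> borel_measurable M"
    by measurable
  note product = integrable_mult_of_square_integrable[OF this _ Z_square]
  have "integrable M (\<lambda>\<omega>. Z (H \<omega>) * noise \<omega>)"
    and "integrable M (\<lambda>\<omega>. Z (H \<omega>) * bias \<omega>)"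
    and "integrable M (\<lambda>\<omega>. Z (H \<omega>) * cond_bias \<omega>)"
    and "integrable M (\<lambda>\<omega>. Z (H \<omega>) * centered \<omega>)"
    by (rule product; simp add: square_integrable_noise square_integrable_bias
        square_integrable_cond_bias square_integrable_centered)+
  moreover have "(\<integral>\<omega>. Z (H \<omega>) * noise \<omega> \<partial>M) = 0"
    using integral_mult_noise_term_eq_0[of "\<lambda>(hh, _). Z hh"] Z_square by (simp add: split_beta')
  moreover have "(\<integral>\<omega>. Z (H \<omega>) * (bias \<omega> - cond_bias \<omega>) \<partial>M) = 0"
    using integral_mult_bias_deviation_eq_0[of "\<lambda>(hh, _). Z hh"] Z_square by (simp add: split_beta')
  moreover have "(\<integral>\<omega>. Z (H \<omega>) * centered \<omega> \<partial>M) = 0"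
    unfolding centered_def by (rule integral_history_mult_centered_inner_eq_0[OF assms])
  ultimately show ?thesis
    unfolding increment_decomposition by (simp add: distrib_left right_diff_distrib)
qed

lemma integral_residual_square:
  fixes \<nu> :: "_ \<Rightarrow> real"
  assumes [measurable]: "\<nu> \<in> borel_measurable (histM MX MA i \<Otimes>\<^sub>M MX \<Otimes>\<^sub>M MA)"
    and \<nu>_square: "integrable M (\<lambda>\<omega>. (\<nu> (H \<omega>, X i \<omega>, A i \<omega>))\<^sup>2)"
  shows "(\<integral>\<omega>. (Y i \<omega> - \<nu> (H \<omega>, X i \<omega>, A i \<omega>))\<^sup>2 \<partial>M)
       = (\<integral>\<omega>. sigma_sq Gam (X i \<omega>) (A i \<omega>) \<partial>M) + (\<integral>\<omega>. (cond_mean \<omega> - \<nu> (H \<omega>, X i \<omega>, A i \<omega>))\<^sup>2 \<partial>M)"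
proof -
  have noise_measurable: "(\<lambda>\<omega>. Y i \<omega> - cond_mean \<omega>) \<in> borel_measurable M"
    by measurable
  have error_measurable: "(\<lambda>\<omega>. cond_mean \<omega> - \<nu> (H \<omega>, X i \<omega>, A i \<omega>)) \<in> borel_measurable M"
    by measurable
  have noise_square: "integrable M (\<lambda>\<omega>. (Y i \<omega> - cond_mean \<omega>)\<^sup>2)"
    using square_integrable_Y square_integrable_cond_mean by (rule integrable_square_diff[rotated 2]) simp_all
  have error_square: "integrable M (\<lambda>\<omega>. (cond_mean \<omega> - \<nu> (H \<omega>, X i \<omega>, A i \<omega>))\<^sup>2)"
    using square_integrable_cond_mean \<nu>_square by (rule integrable_square_diff[rotated 2]) simp_all
  define \<phi> where "\<phi> = (\<lambda>(hh, x, a). mu_star Gam x a - \<nu> (hh, x, a))"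
  have "\<phi> \<in> borel_measurable (histM MX MA i \<Otimes>\<^sub>M MX \<Otimes>\<^sub>M MA)"
    unfolding \<phi>_def split_beta' by measurable
  moreover have "integrable M (\<lambda>\<omega>. \<phi> (H \<omega>, X i \<omega>, A i \<omega>))"
    using M.square_integrable_imp_integrable[OF error_measurable error_square] by (simp add: \<phi>_def)
  ultimately have "(\<integral>\<omega>. (Y i \<omega> - cond_mean \<omega>) * (cond_mean \<omega> - \<nu> (H \<omega>, X i \<omega>, A i \<omega>)) \<partial>M) = 0"
    using integral_mult_noise_eq_0[of \<phi>] by (simp add: \<phi>_def mult.commute)
  from integral_square_add_orthogonal[OF noise_measurable error_measurable noise_square error_square this]
  have "(\<integral>\<omega>. (Y i \<omega> - \<nu> (H \<omega>, X i \<omega>, A i \<omega>))\<^sup>2 \<partial>M)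
      = (\<integral>\<omega>. (Y i \<omega> - cond_mean \<omega>)\<^sup>2 \<partial>M) + (\<integral>\<omega>. (cond_mean \<omega> - \<nu> (H \<omega>, X i \<omega>, A i \<omega>))\<^sup>2 \<partial>M)"
    by simp
  also have "(\<integral>\<omega>. (Y i \<omega> - cond_mean \<omega>)\<^sup>2 \<partial>M) = (\<integral>\<omega>. sigma_sq Gam (X i \<omega>) (A i \<omega>) \<partial>M)"
    using integral_mult_noise_square[where \<psi> = "\<lambda>_. 1", OF borel_measurable_const M.integrable_const] by simp
  finally show ?thesis .
qed

end

section \<open>The mean squared error\<close>

context aipw_fitted
begin

lemma aipw_round_at: "j < n \<Longrightarrow> aipw_round M MX MA lamA Xi Gam pol X A Y g muhat n L B j"
  by (intro aipw_round.intro aipw_fitted_axioms aipw_round_axioms.intro)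

definition partial_sum where
  "partial_sum k hh = (\<Sum>j<k. aipw_increment j (restrict hh {..<j}) (fst (hh j)) (fst (snd (hh j))) (snd (snd (hh j))))"

lemma restrict_hist: "j \<le> k \<Longrightarrow> restrict (hist X A Y k \<omega>) {..<j} = hist X A Y j \<omega>"
  unfolding hist_def by (auto simp: restrict_def fun_eq_iff)

lemma partial_sum_hist: "partial_sum k (hist X A Y k \<omega>) = (\<Sum>j<k. increment j \<omega>)"
  unfolding partial_sum_def by (intro sum.cong refl) (simp add: restrict_hist, simp add: hist_def)

lemma aipw_increment_measurable:
  assumes "j < n"
  shows "(\<lambda>(hh, x, a, y). aipw_increment j hh x a y) \<in> borel_measurable (histM MX MA j \<Otimes>\<^sub>M MX \<Otimes>\<^sub>M MA \<Otimes>\<^sub>M borel)"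
proof -
  interpret aipw_round M MX MA lamA Xi Gam pol X A Y g muhat n L B j
    by (rule aipw_round_at[OF assms])
  show ?thesis
    unfolding aipw_increment_def split_beta' by measurable
qed

lemma partial_sum_measurable:
  assumes "k \<le> n"
  shows "partial_sum k \<in> borel_measurable (histM MX MA k)"
  unfolding partial_sum_def
proof (rule borel_measurable_sum)
  fix j assume "j \<in> {..<k}"
  with assms have j: "j < k" "j < n"
    by auto
  have "(\<lambda>hh. (restrict hh {..<j}, hh j)) \<in> measurable (histM MX MA k) (histM MX MA j \<Otimes>\<^sub>M (MX \<Otimes>\<^sub>M MA \<Otimes>\<^sub>M borel))"
    unfolding histM_def using j
    by (intro measurable_Pair measurable_restrict_subset measurable_component_singleton) auto
  from measurable_compose[OF this aipw_increment_measurable[OF j(2)]]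
  show "(\<lambda>hh. aipw_increment j (restrict hh {..<j}) (fst (hh j)) (fst (snd (hh j))) (snd (snd (hh j))))
      \<in> borel_measurable (histM MX MA k)"
    by (simp add: split_beta')
qed

lemma integral_sum_increments_square:
  "k \<le> n \<Longrightarrow> integrable M (\<lambda>\<omega>. (\<Sum>j<k. increment j \<omega>)\<^sup>2)
     \<and> (\<integral>\<omega>. (\<Sum>j<k. increment j \<omega>)\<^sup>2 \<partial>M) = (\<Sum>j<k. \<integral>\<omega>. (increment j \<omega>)\<^sup>2 \<partial>M)"
proof (induction k)
  case (Suc k)
  then have k: "k < n"
    by simp
  interpret aipw_round M MX MA lamA Xi Gam pol X A Y g muhat n L B k
    by (rule aipw_round_at[OF k])
  have sum_eq: "(\<Sum>j<k. increment j \<omega>) = partial_sum k (H \<omega>)" for \<omega>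
    by (simp add: partial_sum_hist)
  have [measurable]: "partial_sum k \<in> borel_measurable (histM MX MA k)"
    using k by (intro partial_sum_measurable) simp
  have S_measurable: "(\<lambda>\<omega>. \<Sum>j<k. increment j \<omega>) \<in> borel_measurable M"
    unfolding sum_eq by measurable
  have D_measurable: "(\<lambda>\<omega>. increment k \<omega>) \<in> borel_measurable M"
    unfolding increment_decomposition by measurable
  have IH: "integrable M (\<lambda>\<omega>. (\<Sum>j<k. increment j \<omega>)\<^sup>2)"
    "(\<integral>\<omega>. (\<Sum>j<k. increment j \<omega>)\<^sup>2 \<partial>M) = (\<Sum>j<k. \<integral>\<omega>. (increment j \<omega>)\<^sup>2 \<partial>M)"
    using Suc by simp_all
  have "(\<integral>\<omega>. (\<Sum>j<k. increment j \<omega>) * increment k \<omega> \<partial>M) = 0"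
    unfolding sum_eq using IH(1) by (intro integral_history_mult_increment_eq_0) (simp_all add: sum_eq)
  from integral_square_add_orthogonal[OF S_measurable D_measurable IH(1) square_integrable_increment this]
    integrable_square_add[OF S_measurable D_measurable IH(1) square_integrable_increment] IH(2)
  show ?case
    by simp
qed simp

lemma aipw_minus_target:
  assumes "0 < n"
  shows "aipw lamA g pol muhat X A Y n \<omega> - target = (1 / real n) * (\<Sum>j<n. increment j \<omega>)"
  using assms by (simp add: aipw_def aipw_increment_def sum_subtractf field_simps)

lemma mean_square_error_le:
  assumes "0 < n"
  shows "(\<integral>\<omega>. (aipw lamA g pol muhat X A Y n \<omega> - target)\<^sup>2 \<partial>M)
     \<le> (1 / real n) * (v_star_sq M Xi lamA g Gam pol X A Y n
         + B\<^sup>2 * ((1 / real n) * (\<Sum>j<n. \<integral>\<omega>.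
              (mu_star Gam (X j \<omega>) (A j \<omega>) - muhat j (hist X A Y j \<omega>) (X j \<omega>) (A j \<omega>))\<^sup>2 \<partial>M)))"
proof -
  define V where "V = (\<integral>x. (inner_star x - target)\<^sup>2 \<partial>Xi)"
  define N where "N j = (\<integral>\<omega>. (g (X j \<omega>) (A j \<omega>))\<^sup>2 * (sqrt (sigma_sq Gam (X j \<omega>) (A j \<omega>)))\<^sup>2
           / (pol j (X j \<omega>) (hist X A Y j \<omega>) (A j \<omega>))\<^sup>2 \<partial>M)" for j
  define T where "T j = (\<integral>\<omega>. (mu_star Gam (X j \<omega>) (A j \<omega>) - muhat j (hist X A Y j \<omega>) (X j \<omega>) (A j \<omega>))\<^sup>2 \<partial>M)" for j
  have round_bound: "(\<integral>\<omega>. (increment j \<omega>)\<^sup>2 \<partial>M) \<le> V + N j + B\<^sup>2 * T j" if "j < n" for j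
  proof -
    interpret aipw_round M MX MA lamA Xi Gam pol X A Y g muhat n L B j
      by (rule aipw_round_at[OF that])
    have "(\<integral>\<omega>. (weight \<omega>)\<^sup>2 * sigma_sq Gam (X j \<omega>) (A j \<omega>) \<partial>M) = N j"
      unfolding N_def weight_def by (simp add: power_divide sigma_sq_nonneg)
    with integral_increment_square_le show ?thesis
      by (simp add: V_def T_def)
  qed
  have "(\<integral>\<omega>. (aipw lamA g pol muhat X A Y n \<omega> - target)\<^sup>2 \<partial>M)
      = (\<integral>\<omega>. (1 / real n)\<^sup>2 * (\<Sum>j<n. increment j \<omega>)\<^sup>2 \<partial>M)"
    by (simp only: aipw_minus_target[OF assms] power_mult_distrib)
  also have "\<dots> = (1 / real n)\<^sup>2 * (\<Sum>j<n. \<integral>\<omega>. (increment j \<omega>)\<^sup>2 \<partial>M)"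
    using integral_sum_increments_square[of n] by simp
  also have "\<dots> \<le> (1 / real n)\<^sup>2 * (\<Sum>j<n. V + N j + B\<^sup>2 * T j)"
    using round_bound by (intro mult_left_mono sum_mono) simp_all
  also have "\<dots> = (1 / real n) * (V + (1 / real n) * (\<Sum>j<n. N j) + B\<^sup>2 * ((1 / real n) * (\<Sum>j<n. T j)))"
    using assms by (simp add: sum.distrib sum_distrib_left power2_eq_square field_simps)
  finally show ?thesis
    by (simp add: v_star_sq_def norm_n_sq_def V_def N_def T_def)
qed


lemma integral_fit_loss:
  assumes "j < n"
  shows "(\<integral>\<omega>. (Y j \<omega> - muhat j (hist X A Y j \<omega>) (X j \<omega>) (A j \<omega>))\<^sup>2 \<partial>M)
       = (\<integral>\<omega>. sigma_sq Gam (X j \<omega>) (A j \<omega>) \<partial>M)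
         + (\<integral>\<omega>. (mu_star Gam (X j \<omega>) (A j \<omega>) - muhat j (hist X A Y j \<omega>) (X j \<omega>) (A j \<omega>))\<^sup>2 \<partial>M)"
proof -
  interpret aipw_round M MX MA lamA Xi Gam pol X A Y g muhat n L B j
    by (rule aipw_round_at[OF assms])
  have "(\<lambda>(hh, x, a). muhat j hh x a) \<in> borel_measurable (histM MX MA j \<Otimes>\<^sub>M MX \<Otimes>\<^sub>M MA)"
    unfolding split_beta' by measurable
  from integral_residual_square[OF this] square_integrable_fit show ?thesis
    by simp
qed

end

section \<open>Regret\<close>

context aipw_model
begin

context
  fixes F :: "('x \<Rightarrow> 'a \<Rightarrow> real) set"
  assumes F_measurable: "\<forall>mu\<in>F. (\<lambda>(x, a). mu x a) \<in> borel_measurable (MX \<Otimes>\<^sub>M MA) \<and> (\<forall>x a. \<bar>mu x a\<bar> \<le> L)"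
    and F_nonempty: "F \<noteq> {}"
    and integrable_regret: "integrable M (regret F muhat X A Y n)"
begin

abbreviation "loss \<omega> \<equiv> \<Sum>j<n. (Y j \<omega> - muhat j (hist X A Y j \<omega>) (X j \<omega>) (A j \<omega>))\<^sup>2"
abbreviation "loss_of mu \<omega> \<equiv> \<Sum>j<n. (Y j \<omega> - mu (X j \<omega>) (A j \<omega>))\<^sup>2"
abbreviation "best_loss \<omega> \<equiv> INF mu\<in>F. loss_of mu \<omega>"

lemma best_loss_le: "mu \<in> F \<Longrightarrow> best_loss \<omega> \<le> loss_of mu \<omega>"
  by (rule cINF_lower) (auto intro!: bdd_belowI[of _ 0] sum_nonneg)

lemma integrable_loss_term:
  assumes mu: "mu \<in> F" and j: "j < n"
  shows "integrable M (\<lambda>\<omega>. (Y j \<omega> - mu (X j \<omega>) (A j \<omega>))\<^sup>2)"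
proof (rule M.integrable_square_of_AE_abs_le[where K = "2 * L"])
  note [measurable] = data_measurable[OF j]
  have "(\<lambda>(x, a). mu x a) \<in> borel_measurable (MX \<Otimes>\<^sub>M MA)"
    using F_measurable mu by blast
  from measurable_compose[OF _ this, of "\<lambda>\<omega>. (X j \<omega>, A j \<omega>)"]
  have [measurable]: "(\<lambda>\<omega>. mu (X j \<omega>) (A j \<omega>)) \<in> borel_measurable M"
    by simp
  show "(\<lambda>\<omega>. Y j \<omega> - mu (X j \<omega>) (A j \<omega>)) \<in> borel_measurable M"
    by measurable
  show "AE \<omega> in M. \<bar>Y j \<omega> - mu (X j \<omega>) (A j \<omega>)\<bar> \<le> 2 * L"
    using AE_abs_Y_le[OF j]
  proof eventually_elim
    case (elim \<omega>)
    moreover have "\<bar>mu (X j \<omega>) (A j \<omega>)\<bar> \<le> L"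
      using F_measurable mu by blast
    ultimately show ?case
      by linarith
  qed
qed

lemma integrable_loss_of: "mu \<in> F \<Longrightarrow> integrable M (loss_of mu)"
  by (intro Bochner_Integration.integrable_sum integrable_loss_term) auto

lemma best_loss_nonneg: "0 \<le> best_loss \<omega>"
  by (rule cINF_greatest[OF F_nonempty]) (simp add: sum_nonneg)

lemma loss_measurable: "loss \<in> borel_measurable M"
proof (rule borel_measurable_sum)
  fix j assume "j \<in> {..<n}"
  then have j: "j < n"
    by simp
  note [measurable] = data_measurable[OF j] fit_measurable[OF j]
  show "(\<lambda>\<omega>. (Y j \<omega> - muhat j (hist X A Y j \<omega>) (X j \<omega>) (A j \<omega>))\<^sup>2) \<in> borel_measurable M"
    by measurable
qed

lemma regret_eq: "regret F muhat X A Y n \<omega> = loss \<omega> - best_loss \<omega>"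
  unfolding regret_def ..

lemma integrable_best_loss: "integrable M best_loss"
proof -
  obtain mu where mu: "mu \<in> F"
    using F_nonempty by blast
  \<comment> \<open>An infimum over \<open>F\<close> need not be measurable; here it is, being \<open>loss - regret\<close>.\<close>
  have "regret F muhat X A Y n \<in> borel_measurable M"
    using integrable_regret by blast
  with loss_measurable have "(\<lambda>\<omega>. loss \<omega> - regret F muhat X A Y n \<omega>) \<in> borel_measurable M"
    by (rule borel_measurable_diff)
  then have "best_loss \<in> borel_measurable M"
    by (simp add: regret_eq)
  moreover have "AE \<omega> in M. norm (best_loss \<omega>) \<le> norm (loss_of mu \<omega>)"
  proof (intro AE_I2)
    fix \<omega>
    show "norm (best_loss \<omega>) \<le> norm (loss_of mu \<omega>)"
      using best_loss_le[OF mu, of \<omega>] best_loss_nonneg[of \<omega>] unfolding real_norm_def by linarith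
  qed
  ultimately show ?thesis
    by (rule Bochner_Integration.integrable_bound[OF integrable_loss_of[OF mu]])
qed

lemma integrable_loss: "integrable M loss"
  using Bochner_Integration.integrable_add[OF integrable_regret integrable_best_loss]
  by (simp add: regret_eq)

lemma residual_square_integrable_of_regret:
  "\<forall>j<n. integrable M (\<lambda>\<omega>. (Y j \<omega> - muhat j (hist X A Y j \<omega>) (X j \<omega>) (A j \<omega>))\<^sup>2)"
proof (intro allI impI)
  fix j assume j: "j < n"
  note [measurable] = data_measurable[OF j] fit_measurable[OF j]
  show "integrable M (\<lambda>\<omega>. (Y j \<omega> - muhat j (hist X A Y j \<omega>) (X j \<omega>) (A j \<omega>))\<^sup>2)"
  proof (rule Bochner_Integration.integrable_bound[OF integrable_loss])
    show "(\<lambda>\<omega>. (Y j \<omega> - muhat j (hist X A Y j \<omega>) (X j \<omega>) (A j \<omega>))\<^sup>2) \<in> borel_measurable M"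
      by measurable
    show "AE \<omega> in M. norm ((Y j \<omega> - muhat j (hist X A Y j \<omega>) (X j \<omega>) (A j \<omega>))\<^sup>2) \<le> norm (loss \<omega>)"
    proof (intro AE_I2)
      fix \<omega>
      have "(Y j \<omega> - muhat j (hist X A Y j \<omega>) (X j \<omega>) (A j \<omega>))\<^sup>2 \<le> loss \<omega>"
        using j by (intro member_le_sum) auto
      from order_trans[OF this abs_ge_self]
      show "norm ((Y j \<omega> - muhat j (hist X A Y j \<omega>) (X j \<omega>) (A j \<omega>))\<^sup>2) \<le> norm (loss \<omega>)"
        by simp
    qed
  qed
qed

lemma aipw_fitted_of_regret: "aipw_fitted M MX MA lamA Xi Gam pol X A Y g muhat n L B"
  by (intro aipw_fitted.intro aipw_model_axioms aipw_fitted_axioms.intro residual_square_integrable_of_regret)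

lemma integral_class_loss:
  assumes mu: "mu \<in> F" and j: "j < n"
  shows "(\<integral>\<omega>. (Y j \<omega> - mu (X j \<omega>) (A j \<omega>))\<^sup>2 \<partial>M)
       = (\<integral>\<omega>. sigma_sq Gam (X j \<omega>) (A j \<omega>) \<partial>M) + (\<integral>\<omega>. (mu (X j \<omega>) (A j \<omega>) - mu_star Gam (X j \<omega>) (A j \<omega>))\<^sup>2 \<partial>M)"
proof -
  interpret aipw_fitted M MX MA lamA Xi Gam pol X A Y g muhat n L B
    by (rule aipw_fitted_of_regret)
  interpret aipw_round M MX MA lamA Xi Gam pol X A Y g muhat n L B j
    by (rule aipw_round_at[OF j])
  have mu_measurable: "(\<lambda>(x, a). mu x a) \<in> borel_measurable (MX \<Otimes>\<^sub>M MA)"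
    using F_measurable mu by blast
  have composed: "(\<lambda>\<omega>. mu (X j \<omega>) (A j \<omega>)) \<in> borel_measurable M"
    and measurable: "(\<lambda>(hh, x, a). mu x a) \<in> borel_measurable (histM MX MA j \<Otimes>\<^sub>M MX \<Otimes>\<^sub>M MA)"
    using measurable_compose[OF _ mu_measurable, of "\<lambda>\<omega>. (X j \<omega>, A j \<omega>)"]
      measurable_compose[OF measurable_snd mu_measurable]
    by (simp_all add: split_beta')
  have "AE \<omega> in M. \<bar>mu (X j \<omega>) (A j \<omega>)\<bar> \<le> L"
    using F_measurable mu by simp
  with composed have "integrable M (\<lambda>\<omega>. (mu (X j \<omega>) (A j \<omega>))\<^sup>2)"
    by (rule M.integrable_square_of_AE_abs_le)
  with integral_residual_square[OF measurable] show ?thesis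
    by (simp add: power2_commute)
qed

lemma sum_fit_error_le:
  assumes mu: "mu \<in> F"
  shows "(\<Sum>j<n. \<integral>\<omega>. (mu_star Gam (X j \<omega>) (A j \<omega>) - muhat j (hist X A Y j \<omega>) (X j \<omega>) (A j \<omega>))\<^sup>2 \<partial>M)
     \<le> (\<integral>\<omega>. regret F muhat X A Y n \<omega> \<partial>M)
       + (\<Sum>j<n. \<integral>\<omega>. (mu (X j \<omega>) (A j \<omega>) - mu_star Gam (X j \<omega>) (A j \<omega>))\<^sup>2 \<partial>M)"
proof -
  interpret aipw_fitted M MX MA lamA Xi Gam pol X A Y g muhat n L B
    by (rule aipw_fitted_of_regret)
  define S where "S j = (\<integral>\<omega>. sigma_sq Gam (X j \<omega>) (A j \<omega>) \<partial>M)" for j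
  have "(\<Sum>j<n. S j + (\<integral>\<omega>. (mu_star Gam (X j \<omega>) (A j \<omega>) - muhat j (hist X A Y j \<omega>) (X j \<omega>) (A j \<omega>))\<^sup>2 \<partial>M))
      = (\<integral>\<omega>. loss \<omega> \<partial>M)"
    using residual_square_integrable by (simp add: S_def integral_fit_loss integral_sum)
  also have "\<dots> = (\<integral>\<omega>. regret F muhat X A Y n \<omega> + best_loss \<omega> \<partial>M)"
    by (simp add: regret_eq)
  also have "\<dots> = (\<integral>\<omega>. regret F muhat X A Y n \<omega> \<partial>M) + (\<integral>\<omega>. best_loss \<omega> \<partial>M)"
    by (rule Bochner_Integration.integral_add[OF integrable_regret integrable_best_loss])
  also have "(\<integral>\<omega>. best_loss \<omega> \<partial>M) \<le> (\<integral>\<omega>. loss_of mu \<omega> \<partial>M)"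
    using integrable_best_loss integrable_loss_of[OF mu] best_loss_le[OF mu] by (rule integral_mono)
  also have "\<dots> = (\<Sum>j<n. S j + (\<integral>\<omega>. (mu (X j \<omega>) (A j \<omega>) - mu_star Gam (X j \<omega>) (A j \<omega>))\<^sup>2 \<partial>M))"
    using integrable_loss_term[OF mu] by (simp add: S_def integral_class_loss[OF mu] integral_sum)
  finally show ?thesis
    by (simp add: sum.distrib)
qed

lemma mean_fit_error_le:
  "(1 / real n) * (\<Sum>j<n. \<integral>\<omega>. (mu_star Gam (X j \<omega>) (A j \<omega>) - muhat j (hist X A Y j \<omega>) (X j \<omega>) (A j \<omega>))\<^sup>2 \<partial>M)
   \<le> (1 / real n) * (\<integral>\<omega>. regret F muhat X A Y n \<omega> \<partial>M)
     + (INF mu\<in>F. (1 / real n) * (\<Sum>j<n. \<integral>\<omega>. (mu (X j \<omega>) (A j \<omega>) - mu_star Gam (X j \<omega>) (A j \<omega>))\<^sup>2 \<partial>M))"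
  (is "?T \<le> ?R + (INF mu\<in>F. ?P mu)")
proof -
  have "?T - ?R \<le> (INF mu\<in>F. ?P mu)"
  proof (rule cINF_greatest[OF F_nonempty])
    fix mu assume "mu \<in> F"
    from mult_left_mono[OF sum_fit_error_le[OF this], of "1 / real n"]
    show "?T - ?R \<le> ?P mu"
      by (simp add: distrib_left)
  qed
  then show ?thesis
    by simp
qed

end

end

theorem theorem6:
  fixes M :: "'w measure" and MX :: "'x measure" and MA :: "'a measure"
    and lamA :: "'a measure" and Xi :: "'x measure"
    and Gam :: "'x \<Rightarrow> 'a \<Rightarrow> real measure"
    and pol :: "nat \<Rightarrow> 'x \<Rightarrow> ('x, 'a) hist \<Rightarrow> 'a \<Rightarrow> real"
    and X :: "nat \<Rightarrow> 'w \<Rightarrow> 'x" and A :: "nat \<Rightarrow> 'w \<Rightarrow> 'a" and Y :: "nat \<Rightarrow> 'w \<Rightarrow> real"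
    and g :: "'x \<Rightarrow> 'a \<Rightarrow> real"
    and muhat :: "nat \<Rightarrow> ('x, 'a) hist \<Rightarrow> 'x \<Rightarrow> 'a \<Rightarrow> real"
    and F :: "('x \<Rightarrow> 'a \<Rightarrow> real) set"
    and n :: nat and L B :: real
  assumes model: "sequential_model M MX MA lamA Xi Gam pol X A Y n"
    and n_pos: "0 < n"
    and Y_range: "\<forall>x a. AE y in Gam x a. \<bar>y\<bar> \<le> L"
    and g_meas: "(\<lambda>(x, a). g x a) \<in> borel_measurable (MX \<Otimes>\<^sub>M MA)"
    and B_pos: "0 < B"
    and overlap: "\<forall>i<n. AE \<omega> in M.
        \<bar>g (X i \<omega>) (A i \<omega>) / pol i (X i \<omega>) (hist X A Y i \<omega>) (A i \<omega>)\<bar> \<le> B"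
    and coverage: "\<forall>i<n. \<forall>x hh a. g x a \<noteq> 0 \<longrightarrow> 0 < pol i x hh a"
    and F_meas: "\<forall>mu\<in>F. (\<lambda>(x, a). mu x a) \<in> borel_measurable (MX \<Otimes>\<^sub>M MA)
                          \<and> (\<forall>x a. \<bar>mu x a\<bar> \<le> L)"
    and F_ne: "F \<noteq> {}"
    and muhat_meas: "\<forall>i<n. (\<lambda>(hh, x, a). muhat i hh x a)
                        \<in> borel_measurable (histM MX MA i \<Otimes>\<^sub>M MX \<Otimes>\<^sub>M MA)"
    and fin_inner_hat: "\<forall>i<n. \<forall>hh x. integrable lamA (\<lambda>a. g x a * muhat i hh x a)"
    and fin_inner_star: "\<forall>x. integrable lamA (\<lambda>a. g x a * mu_star Gam x a)"
    and fin_var: "integrable Xi (\<lambda>x. (innerA lamA (g x) (mu_star Gam x))\<^sup>2)"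
    and fin_regret: "integrable M (regret F muhat X A Y n)"
    and fin_mse: "integrable M (\<lambda>\<omega>. (aipw lamA g pol muhat X A Y n \<omega> - tau Xi lamA g Gam)\<^sup>2)"
  shows "(\<integral>\<omega>. (aipw lamA g pol muhat X A Y n \<omega> - tau Xi lamA g Gam)\<^sup>2 \<partial>M)
     \<le> (1 / real n) * (v_star_sq M Xi lamA g Gam pol X A Y n
         + B\<^sup>2 * ((1 / real n) * (\<integral>\<omega>. regret F muhat X A Y n \<omega> \<partial>M)
                 + (INF mu\<in>F. (1 / real n) * (\<Sum>i<n.
                      \<integral>\<omega>. (mu (X i \<omega>) (A i \<omega>) - mu_star Gam (X i \<omega>) (A i \<omega>))\<^sup>2 \<partial>M))))"
proof -
  interpret aipw_model M MX MA lamA Xi Gam pol X A Y g muhat n L B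
    using model Y_range g_meas overlap coverage muhat_meas fin_inner_hat fin_inner_star fin_var
    by unfold_locales
  interpret aipw_fitted M MX MA lamA Xi Gam pol X A Y g muhat n L B
    using F_meas F_ne fin_regret by (rule aipw_fitted_of_regret)
  have "B\<^sup>2 * ((1 / real n) * (\<Sum>j<n. \<integral>\<omega>.
            (mu_star Gam (X j \<omega>) (A j \<omega>) - muhat j (hist X A Y j \<omega>) (X j \<omega>) (A j \<omega>))\<^sup>2 \<partial>M))
      \<le> B\<^sup>2 * ((1 / real n) * (\<integral>\<omega>. regret F muhat X A Y n \<omega> \<partial>M)
          + (INF mu\<in>F. (1 / real n) * (\<Sum>i<n.
               \<integral>\<omega>. (mu (X i \<omega>) (A i \<omega>) - mu_star Gam (X i \<omega>) (A i \<omega>))\<^sup>2 \<partial>M)))"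
    using mean_fit_error_le[OF F_meas F_ne fin_regret] by (rule mult_left_mono) simp
  from order_trans[OF mean_square_error_le[OF n_pos] mult_left_mono[OF add_left_mono[OF this]]]
  show ?thesis
    by simp
qed

end
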